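(* Let $r\le 1$ and let $u$ be a minimizer of $G(v)=\int_{B_r}\tfrac12|\nabla v|^2+g(v)$ on $B_r$, where $g$ satisfies $|g(t)-g(s)|\le\eta(t-s)$ for all $t,s\in\mathbb R$. There are constants $c_*>0$ and $C$, depending only on $n$ and $C_0$, such that if $\operatorname{osc}_{B_r}u\le c_*$ and $h$ is the harmonic function in $B_r$ with $h=u$ on $\partial B_r$, then \[ \frac{1}{|B_r|}\int_{B_r}|\nabla(u-h)|^2\le C\,\frac{\eta^2(r^2)}{r^2}. \]
   Context: Fix $C_0>0$ and set $\eta(t)=C_0|t|(1+|\log|t||)$ for $t\ne0$, $\eta(0)=0$. A function $u\in H^1(\Omega)$ is a minimizer of $G$ on $\Omega$ if $G(u)\le G(v)$ for all $v\in H^1(\Omega)$ with $v-u\in H^1_0(\Omega)$. $B_r$ is the ball of radius $r$ centered at $0$ in $\mathbb R^n$, $n\ge3$. *)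

theory Defs
  imports "HOL-Analysis.Analysis" "HOL-Probability.Essential_Supremum"
begin

definition eta :: "real \<Rightarrow> real \<Rightarrow> real" where
  "eta C0 t = (if t = 0 then 0 else C0 * \<bar>t\<bar> * (1 + \<bar>ln \<bar>t\<bar>\<bar>))"

definition test_fun :: "(real^'n::finite) set \<Rightarrow> (real^'n \<Rightarrow> real) \<Rightarrow> (real^'n \<Rightarrow> real^'n) \<Rightarrow> bool" where
  "test_fun S phi dphi \<longleftrightarrow>
     (\<forall>x. (phi has_derivative (\<lambda>v. dphi x \<bullet> v)) (at x)) \<and> continuous_on UNIV dphi \<and>
     compact (closure {x. phi x \<noteq> 0}) \<and> closure {x. phi x \<noteq> 0} \<subseteq> S"

definition weak_grad :: "(real^'n::finite) set \<Rightarrow> (real^'n \<Rightarrow> real) \<Rightarrow> (real^'n \<Rightarrow> real^'n) \<Rightarrow> bool" where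
  "weak_grad S u Du \<longleftrightarrow>
     (\<forall>phi dphi. test_fun S phi dphi \<longrightarrow>
        integral\<^sup>L (lebesgue_on S) (\<lambda>x. u x *\<^sub>R dphi x)
          = - integral\<^sup>L (lebesgue_on S) (\<lambda>x. phi x *\<^sub>R Du x))"

definition H1 :: "(real^'n::finite) set \<Rightarrow> (real^'n \<Rightarrow> real) \<Rightarrow> (real^'n \<Rightarrow> real^'n) \<Rightarrow> bool" where
  "H1 S u Du \<longleftrightarrow>
     u \<in> borel_measurable (lebesgue_on S) \<and> Du \<in> borel_measurable (lebesgue_on S) \<and>
     integrable (lebesgue_on S) (\<lambda>x. (u x)\<^sup>2) \<and>
     integrable (lebesgue_on S) (\<lambda>x. (norm (Du x))\<^sup>2) \<and>
     weak_grad S u Du"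

definition H1_0 :: "(real^'n::finite) set \<Rightarrow> (real^'n \<Rightarrow> real) \<Rightarrow> (real^'n \<Rightarrow> real^'n) \<Rightarrow> bool" where
  "H1_0 S u Du \<longleftrightarrow> H1 S u Du \<and>
     (\<exists>phi dphi. (\<forall>k. test_fun S (phi k) (dphi k)) \<and>
        (\<lambda>k. integral\<^sup>L (lebesgue_on S)
               (\<lambda>x. (phi k x - u x)\<^sup>2 + (norm (dphi k x - Du x))\<^sup>2)) \<longlonglongrightarrow> 0)"

definition Gfun :: "(real^'n::finite) set \<Rightarrow> (real \<Rightarrow> real) \<Rightarrow> (real^'n \<Rightarrow> real) \<Rightarrow> (real^'n \<Rightarrow> real^'n) \<Rightarrow> real" where
  "Gfun S g v Dv = integral\<^sup>L (lebesgue_on S) (\<lambda>x. (norm (Dv x))\<^sup>2 / 2 + g (v x))"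

definition minimizer :: "(real^'n::finite) set \<Rightarrow> (real \<Rightarrow> real) \<Rightarrow> (real^'n \<Rightarrow> real) \<Rightarrow> (real^'n \<Rightarrow> real^'n) \<Rightarrow> bool" where
  "minimizer S g u Du \<longleftrightarrow> H1 S u Du \<and>
     (\<forall>v Dv. H1 S v Dv \<and> H1_0 S (\<lambda>x. v x - u x) (\<lambda>x. Dv x - Du x) \<longrightarrow> Gfun S g u Du \<le> Gfun S g v Dv)"

definition ess_osc :: "(real^'n::finite) set \<Rightarrow> (real^'n \<Rightarrow> real) \<Rightarrow> ereal" where
  "ess_osc S u = esssup (lebesgue_on S) (\<lambda>x. ereal (u x))
                 - (- esssup (lebesgue_on S) (\<lambda>x. - ereal (u x)))"

text \<open>Classical harmonic functions: C^2 on S with vanishing Laplacian.\<close>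
definition harmonic_on :: "(real^'n::finite) set \<Rightarrow> (real^'n \<Rightarrow> real) \<Rightarrow> bool" where
  "harmonic_on S h \<longleftrightarrow>
     (\<exists>Dh D2h. (\<forall>x\<in>S. (h has_derivative (\<lambda>v. Dh x \<bullet> v)) (at x)) \<and>
               (\<forall>x\<in>S. (Dh has_derivative D2h x) (at x)) \<and>
               continuous_on S (\<lambda>x. \<chi> i j. D2h x (axis j 1) $ i) \<and>
               (\<forall>x\<in>S. (\<Sum>i\<in>UNIV. D2h x (axis i 1) $ i) = 0))"

end

theory Submission
  imports Defs "HOL-Real_Asymp.Real_Asymp"
begin

(* Since h is harmonic, its gradient is L2-orthogonal to the gradients of H^1_0 functions, so
   int |Du - Dh|^2 = int |Du|^2 - int |Dh|^2.  Testing the minimality of u against h bounds this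
   energy gap by 2 int eta(h - u), and eta(s) <= C0 (2 s^2 / delta + delta (1 + (1 + |ln delta|)^2 / 4)).
   By the Poincare inequality int (h - u)^2 <= 4 r^2 int |Du - Dh|^2, so for delta = 32 C0 r^2 the
   quadratic term is absorbed, leaving C0^2 r^4 (1 + |ln r|)^2 |B_r|, which is of order eta(r^2)^2 |B_r|.
   The orthogonality is proved for test functions and extended by approximation; against a test
   function the weak and the classical gradient of h agree, which is seen by testing the weak
   derivative against difference quotients of the test function. *)

section \<open>Lebesgue integrals\<close>

lemma lebesgue_translation:
  fixes a :: "'a::euclidean_space"
  shows "distr lebesgue lebesgue (\<lambda>x. a + x) = lebesgue"
    and "(\<lambda>x. a + x) \<in> lebesgue \<rightarrow>\<^sub>M lebesgue"
proof -
  have "(\<lambda>x. a + (\<Sum>j\<in>Basis. (1 * (x \<bullet> j)) *\<^sub>R j)) = (\<lambda>x. a + x)"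
    by (simp add: euclidean_representation)
  with lebesgue_affine_euclidean[of "\<lambda>_. 1" a] lebesgue_affine_measurable[of "\<lambda>_. 1" a]
  show "distr lebesgue lebesgue (\<lambda>x. a + x) = lebesgue" "(\<lambda>x. a + x) \<in> lebesgue \<rightarrow>\<^sub>M lebesgue"
    by (auto simp: density_1)
qed

lemma
  fixes a :: "'a::euclidean_space" and f :: "'a \<Rightarrow> 'b::{banach,second_countable_topology}"
  assumes f: "f \<in> borel_measurable lebesgue"
  shows integral_lebesgue_translate: "integral\<^sup>L lebesgue (\<lambda>x. f (a + x)) = integral\<^sup>L lebesgue f"
    and integrable_lebesgue_translate_iff:
      "integrable lebesgue (\<lambda>x. f (a + x)) \<longleftrightarrow> integrable lebesgue f"
    and borel_measurable_lebesgue_translate: "(\<lambda>x. f (a + x)) \<in> borel_measurable lebesgue"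
  using integral_distr[OF lebesgue_translation(2) f] integrable_distr_eq[OF lebesgue_translation(2) f]
    measurable_comp[OF lebesgue_translation(2) f]
  by (simp_all add: lebesgue_translation(1) o_def)

lemma continuous_on_compact_norm_bound:
  fixes f :: "'a::metric_space \<Rightarrow> 'b::real_normed_vector"
  assumes "continuous_on U f" "compact K" "K \<subseteq> U"
  obtains B where "B \<ge> 0" "\<And>x. x \<in> K \<Longrightarrow> norm (f x) \<le> B"
proof -
  obtain B where "\<And>x. x \<in> K \<Longrightarrow> norm (f x) \<le> B"
    using compact_imp_bounded[OF compact_continuous_image[OF continuous_on_subset[OF assms(1,3)] assms(2)]]
    by (auto simp: bounded_iff)
  then show ?thesis
    using that[of "max B 0"] by (auto simp: le_max_iff_disj)
qed

lemma continuous_on_compact_support_UNIV: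
  fixes f :: "'a::t2_space \<Rightarrow> 'b::{zero,topological_space}"
  assumes "open S" "compact K" "K \<subseteq> S" "continuous_on S f" "\<And>x. x \<notin> K \<Longrightarrow> f x = 0"
  shows "continuous_on UNIV f"
proof -
  have "continuous_on (S \<union> - K) f"
  proof (rule continuous_on_open_Un)
    show "continuous_on (- K) f"
      using assms(5) by (intro continuous_on_eq[OF continuous_on_const[of _ 0]]) auto
  qed (use assms in \<open>auto simp: compact_imp_closed open_Compl\<close>)
  moreover have "S \<union> - K = UNIV"
    using assms(3) by auto
  ultimately show ?thesis
    by simp
qed

lemma compact_support_norm_bound:
  fixes f :: "'a::metric_space \<Rightarrow> 'b::real_normed_vector"
  assumes "continuous_on UNIV f" "compact K" "\<And>x. x \<notin> K \<Longrightarrow> f x = 0"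
  shows "\<exists>B\<ge>0. \<forall>x. norm (f x) \<le> B"
proof -
  obtain B where B: "B \<ge> 0" "\<And>x. x \<in> K \<Longrightarrow> norm (f x) \<le> B"
    using continuous_on_compact_norm_bound[OF assms(1,2)] by blast
  then have "norm (f x) \<le> B" for x
    using assms(3)[of x] by (cases "x \<in> K") auto
  with B(1) show ?thesis
    by blast
qed

lemma continuous_imp_borel_measurable_lebesgue_on:
  fixes f :: "'a::euclidean_space \<Rightarrow> 'b::euclidean_space"
  shows "continuous_on UNIV f \<Longrightarrow> f \<in> borel_measurable (lebesgue_on S)"
  using continuous_imp_measurable_on_sets_lebesgue[of UNIV f]
  by (intro measurable_restrict_space1) (simp add: lebesgue_on_UNIV_eq)

lemma borel_measurable_vec_nth_comp[measurable (raw)]: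
  "f \<in> borel_measurable M \<Longrightarrow> (\<lambda>x. f x $ i :: real) \<in> borel_measurable M"
  using measurable_compose[OF _ borel_measurable_nth] by blast

lemma
  fixes f :: "'a::euclidean_space \<Rightarrow> 'b::{banach,second_countable_topology}"
  assumes S: "S \<in> sets lebesgue" and vanish: "\<And>x. x \<notin> S \<Longrightarrow> f x = 0"
  shows integral_lebesgue_on_eq: "integral\<^sup>L (lebesgue_on S) f = integral\<^sup>L lebesgue f"
    and integrable_lebesgue_on_iff: "integrable (lebesgue_on S) f \<longleftrightarrow> integrable lebesgue f"
proof -
  have "(\<lambda>x. indicator S x *\<^sub>R f x) = f"
    using vanish by (auto simp: indicator_def)
  then show "integral\<^sup>L (lebesgue_on S) f = integral\<^sup>L lebesgue f"
    and "integrable (lebesgue_on S) f \<longleftrightarrow> integrable lebesgue f"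
    using integral_restrict_space[of S lebesgue f] integrable_restrict_space[of S lebesgue f] S
    by simp_all
qed

lemma integrable_imp_integrable_lebesgue_on:
  fixes f :: "'a::euclidean_space \<Rightarrow> 'b::{banach,second_countable_topology}"
  shows "S \<in> sets lebesgue \<Longrightarrow> integrable lebesgue f \<Longrightarrow> integrable (lebesgue_on S) f"
  by (simp add: integrable_restrict_space integrable_mult_indicator)

lemma integrable_const_lebesgue_on:
  assumes "S \<in> lmeasurable"
  shows "integrable (lebesgue_on S) (\<lambda>x. c :: real)"
  using assms integrable_imp_integrable_lebesgue_on[of S "\<lambda>x. c * indicator S x"]
  by (auto simp: fmeasurable_def integrable_restrict_space)

lemma integrable_continuous_compact_support:
  fixes f :: "'a::euclidean_space \<Rightarrow> real"
  assumes f: "continuous_on S f" and S: "S \<in> sets lebesgue"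
    and K: "compact K" "K \<subseteq> S" and supp: "\<And>x. x \<notin> K \<Longrightarrow> f x = 0"
  shows "integrable (lebesgue_on S) f"
proof -
  obtain B where B: "B \<ge> 0" "\<And>x. x \<in> K \<Longrightarrow> norm (f x) \<le> B"
    using continuous_on_compact_norm_bound[OF f K] by blast
  have dominant: "integrable (lebesgue_on S) (\<lambda>x. B * indicator K x)"
    using K S fmeasurable_compact[OF K(1)]
    by (auto simp: sets_restrict_space_iff emeasure_restrict_space fmeasurable_def)
  have "norm (f x) \<le> norm (B * indicator K x)" for x
    using B supp[of x] by (cases "x \<in> K") auto
  then show ?thesis
    by (intro Bochner_Integration.integrable_bound[OF dominant
          continuous_imp_measurable_on_sets_lebesgue[OF f S]] AE_I2)
qed

section \<open>Square integrable functions\<close>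

lemma inner_le_weighted_squares:
  fixes u v :: "'a::real_inner"
  assumes "0 < e"
  shows "\<bar>u \<bullet> v\<bar> \<le> e / 2 * (norm u)\<^sup>2 + 1 / (2 * e) * (norm v)\<^sup>2"
proof -
  have "0 \<le> (e * norm u - norm v)\<^sup>2"
    by simp
  then have "norm u * norm v \<le> e / 2 * (norm u)\<^sup>2 + 1 / (2 * e) * (norm v)\<^sup>2"
    using assms by (simp add: field_simps power2_eq_square)
  then show ?thesis
    using Cauchy_Schwarz_ineq2[of u v] by linarith
qed

lemma integrable_inner_square_integrable:
  fixes f g :: "'a \<Rightarrow> 'b::euclidean_space"
  assumes "f \<in> borel_measurable M" "g \<in> borel_measurable M"
    and "integrable M (\<lambda>x. (norm (f x))\<^sup>2)" "integrable M (\<lambda>x. (norm (g x))\<^sup>2)"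
  shows "integrable M (\<lambda>x. f x \<bullet> g x)"
proof (rule Bochner_Integration.integrable_bound)
  show "integrable M (\<lambda>x. 1 / 2 * (norm (f x))\<^sup>2 + 1 / 2 * (norm (g x))\<^sup>2)"
    using assms(3,4) by auto
  show "(\<lambda>x. f x \<bullet> g x) \<in> borel_measurable M"
    using assms(1,2) by measurable
  show "AE x in M. norm (f x \<bullet> g x) \<le> norm (1 / 2 * (norm (f x))\<^sup>2 + 1 / 2 * (norm (g x))\<^sup>2)"
    using inner_le_weighted_squares[of 1] by (intro AE_I2) fastforce
qed

lemma integrable_mult_square_integrable:
  fixes f g :: "'a \<Rightarrow> real"
  assumes "f \<in> borel_measurable M" "g \<in> borel_measurable M"
    and "integrable M (\<lambda>x. (f x)\<^sup>2)" "integrable M (\<lambda>x. (g x)\<^sup>2)"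
  shows "integrable M (\<lambda>x. f x * g x)"
  using integrable_inner_square_integrable[OF assms(1,2)] assms(3,4) by simp

lemma integrable_norm_diff_sq:
  fixes f g :: "'a \<Rightarrow> 'b::euclidean_space"
  assumes "f \<in> borel_measurable M" "g \<in> borel_measurable M"
    and "integrable M (\<lambda>x. (norm (f x))\<^sup>2)" "integrable M (\<lambda>x. (norm (g x))\<^sup>2)"
  shows "integrable M (\<lambda>x. (norm (f x - g x))\<^sup>2)"
proof -
  have "(\<lambda>x. (norm (f x - g x))\<^sup>2) = (\<lambda>x. (norm (f x))\<^sup>2 - 2 * (f x \<bullet> g x) + (norm (g x))\<^sup>2)"
    by (simp add: power2_norm_eq_inner algebra_simps inner_commute)
  with integrable_inner_square_integrable[OF assms] assms(3,4) show ?thesis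
    by simp
qed

lemma integrable_indicator_mult_square_integrable:
  fixes f :: "'a::euclidean_space \<Rightarrow> real"
  assumes K: "compact K" "K \<subseteq> S" and S: "S \<in> sets lebesgue"
    and f: "f \<in> borel_measurable (lebesgue_on S)" "integrable (lebesgue_on S) (\<lambda>x. (f x)\<^sup>2)"
  shows "integrable (lebesgue_on S) (\<lambda>x. indicator K x * f x)"
proof (rule integrable_mult_square_integrable[OF _ f(1) _ f(2)])
  have K_sets: "K \<in> sets (lebesgue_on S)" "emeasure (lebesgue_on S) K < \<infinity>"
    using K S fmeasurable_compact[OF K(1)]
    by (auto simp: sets_restrict_space_iff emeasure_restrict_space fmeasurable_def)
  then show "indicator K \<in> borel_measurable (lebesgue_on S)"
    by simp
  have "(\<lambda>x. (indicator K x :: real)\<^sup>2) = indicator K"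
    by (auto simp: indicator_def)
  then show "integrable (lebesgue_on S) (\<lambda>x. (indicator K x :: real)\<^sup>2)"
    using K_sets by simp
qed

lemma abs_integral_inner_le:
  fixes f g :: "'a \<Rightarrow> 'b::euclidean_space"
  assumes "f \<in> borel_measurable M" "g \<in> borel_measurable M"
    and "integrable M (\<lambda>x. (norm (f x))\<^sup>2)" "integrable M (\<lambda>x. (norm (g x))\<^sup>2)" and e: "0 < e"
  shows "\<bar>integral\<^sup>L M (\<lambda>x. f x \<bullet> g x)\<bar>
    \<le> e / 2 * integral\<^sup>L M (\<lambda>x. (norm (f x))\<^sup>2) + 1 / (2 * e) * integral\<^sup>L M (\<lambda>x. (norm (g x))\<^sup>2)"
proof -
  have "\<bar>integral\<^sup>L M (\<lambda>x. f x \<bullet> g x)\<bar> \<le> integral\<^sup>L M (\<lambda>x. \<bar>f x \<bullet> g x\<bar>)"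
    by (rule integral_abs_bound)
  also have "\<dots> \<le> integral\<^sup>L M (\<lambda>x. e / 2 * (norm (f x))\<^sup>2 + 1 / (2 * e) * (norm (g x))\<^sup>2)"
    using assms integrable_inner_square_integrable[OF assms(1-4)]
    by (intro integral_mono inner_le_weighted_squares) auto
  also have "\<dots> = e / 2 * integral\<^sup>L M (\<lambda>x. (norm (f x))\<^sup>2)
      + 1 / (2 * e) * integral\<^sup>L M (\<lambda>x. (norm (g x))\<^sup>2)"
    using assms(3,4) by simp
  finally show ?thesis .
qed

lemma tendsto_integral_inner_L2:
  fixes f :: "nat \<Rightarrow> 'a \<Rightarrow> 'b::euclidean_space"
  assumes meas: "g \<in> borel_measurable M" "\<And>k. f k \<in> borel_measurable M" "F \<in> borel_measurable M"
    and sq: "integrable M (\<lambda>x. (norm (g x))\<^sup>2)" "\<And>k. integrable M (\<lambda>x. (norm (f k x))\<^sup>2)"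
      "integrable M (\<lambda>x. (norm (F x))\<^sup>2)"
    and lim: "(\<lambda>k. integral\<^sup>L M (\<lambda>x. (norm (f k x - F x))\<^sup>2)) \<longlonglongrightarrow> 0"
  shows "(\<lambda>k. integral\<^sup>L M (\<lambda>x. g x \<bullet> f k x)) \<longlonglongrightarrow> integral\<^sup>L M (\<lambda>x. g x \<bullet> F x)"
proof -
  define G where "G = integral\<^sup>L M (\<lambda>x. (norm (g x))\<^sup>2)"
  define a where "a k = integral\<^sup>L M (\<lambda>x. (norm (f k x - F x))\<^sup>2)" for k
  have G: "0 \<le> G"
    unfolding G_def by simp
  have estimate: "\<bar>integral\<^sup>L M (\<lambda>x. g x \<bullet> f k x) - integral\<^sup>L M (\<lambda>x. g x \<bullet> F x)\<bar>
      \<le> e / 2 * G + 1 / (2 * e) * a k" if e: "0 < e" for e k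
  proof -
    have "integral\<^sup>L M (\<lambda>x. g x \<bullet> f k x) - integral\<^sup>L M (\<lambda>x. g x \<bullet> F x)
        = integral\<^sup>L M (\<lambda>x. g x \<bullet> (f k x - F x))"
      using integrable_inner_square_integrable[OF meas(1,2) sq(1,2)]
        integrable_inner_square_integrable[OF meas(1,3) sq(1,3)]
      by (simp add: inner_diff_right)
    also have "\<bar>\<dots>\<bar> \<le> e / 2 * G + 1 / (2 * e) * a k"
      unfolding G_def a_def using meas sq
      by (intro abs_integral_inner_le integrable_norm_diff_sq e) auto
    finally show ?thesis .
  qed
  have "(\<lambda>k. integral\<^sup>L M (\<lambda>x. g x \<bullet> f k x) - integral\<^sup>L M (\<lambda>x. g x \<bullet> F x)) \<longlonglongrightarrow> 0"
  proof (rule LIMSEQ_I)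
    fix \<epsilon> :: real
    assume "0 < \<epsilon>"
    define e where "e = \<epsilon> / (G + 1)"
    have e: "0 < e" "e / 2 * G < \<epsilon> / 2"
      using \<open>0 < \<epsilon>\<close> G by (auto simp: e_def field_simps)
    then have "0 < e * \<epsilon>"
      using \<open>0 < \<epsilon>\<close> by simp
    then obtain N where N: "\<And>k. k \<ge> N \<Longrightarrow> norm (a k - 0) < e * \<epsilon>"
      using LIMSEQ_D[OF lim[folded a_def]] by blast
    have "\<bar>integral\<^sup>L M (\<lambda>x. g x \<bullet> f k x) - integral\<^sup>L M (\<lambda>x. g x \<bullet> F x)\<bar> < \<epsilon>" if "k \<ge> N" for k
    proof -
      have "1 / (2 * e) * a k < \<epsilon> / 2"
        using N[OF that] e(1) by (simp add: field_simps)
      then show ?thesis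
        using estimate[OF e(1), of k] e(2) by linarith
    qed
    then show "\<exists>N. \<forall>k\<ge>N. norm (integral\<^sup>L M (\<lambda>x. g x \<bullet> f k x) - integral\<^sup>L M (\<lambda>x. g x \<bullet> F x) - 0) < \<epsilon>"
      by auto
  qed
  then show ?thesis
    by (rule LIM_zero_cancel)
qed

lemma tendsto_integral_norm_sq_L2:
  fixes f :: "nat \<Rightarrow> 'a \<Rightarrow> 'b::euclidean_space"
  assumes meas: "\<And>k. f k \<in> borel_measurable M" "F \<in> borel_measurable M"
    and sq: "\<And>k. integrable M (\<lambda>x. (norm (f k x))\<^sup>2)" "integrable M (\<lambda>x. (norm (F x))\<^sup>2)"
    and lim: "(\<lambda>k. integral\<^sup>L M (\<lambda>x. (norm (f k x - F x))\<^sup>2)) \<longlonglongrightarrow> 0"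
  shows "(\<lambda>k. integral\<^sup>L M (\<lambda>x. (norm (f k x))\<^sup>2)) \<longlonglongrightarrow> integral\<^sup>L M (\<lambda>x. (norm (F x))\<^sup>2)"
proof -
  have "(norm (f k x))\<^sup>2 = (norm (f k x - F x))\<^sup>2 + 2 * (F x \<bullet> f k x) - (norm (F x))\<^sup>2" for k x
    by (simp add: power2_norm_eq_inner algebra_simps inner_commute)
  then have eq: "integral\<^sup>L M (\<lambda>x. (norm (f k x))\<^sup>2) = integral\<^sup>L M (\<lambda>x. (norm (f k x - F x))\<^sup>2)
      + 2 * integral\<^sup>L M (\<lambda>x. F x \<bullet> f k x) - integral\<^sup>L M (\<lambda>x. (norm (F x))\<^sup>2)" for k
    using integrable_norm_diff_sq[OF meas(1,2) sq(1,2)]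
      integrable_inner_square_integrable[OF meas(2,1) sq(2,1)] sq(2)
    by simp
  have "(\<lambda>k. integral\<^sup>L M (\<lambda>x. (norm (f k x - F x))\<^sup>2) + 2 * integral\<^sup>L M (\<lambda>x. F x \<bullet> f k x)
      - integral\<^sup>L M (\<lambda>x. (norm (F x))\<^sup>2))
      \<longlonglongrightarrow> 0 + 2 * integral\<^sup>L M (\<lambda>x. F x \<bullet> F x) - integral\<^sup>L M (\<lambda>x. (norm (F x))\<^sup>2)"
    by (intro tendsto_intros lim tendsto_integral_inner_L2[OF meas(2,1,2) sq(2,1,2) lim])
  then show ?thesis
    unfolding eq by (simp add: power2_norm_eq_inner)
qed

lemma tendsto_integral_bounded_mult:
  fixes F :: "nat \<Rightarrow> 'a \<Rightarrow> real"
  assumes D: "integrable M D" and F: "\<And>k. F k \<in> borel_measurable M"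
    and bound: "\<And>k x. \<bar>F k x\<bar> \<le> B" and lim: "\<And>x. (\<lambda>k. F k x) \<longlonglongrightarrow> F' x"
  shows "integrable M (\<lambda>x. F' x * D x)"
    and "(\<lambda>k. integral\<^sup>L M (\<lambda>x. F k x * D x)) \<longlonglongrightarrow> integral\<^sup>L M (\<lambda>x. F' x * D x)"
proof -
  have "F' \<in> borel_measurable M"
    by (rule borel_measurable_LIMSEQ_real[OF lim F])
  then have meas: "(\<lambda>x. F' x * D x) \<in> borel_measurable M" "(\<lambda>x. F k x * D x) \<in> borel_measurable M"
    for k
    using borel_measurable_integrable[OF D] F by measurable
  have dominated: "integrable M (\<lambda>x. B * norm (D x))"
    "AE x in M. (\<lambda>k. F k x * D x) \<longlonglongrightarrow> F' x * D x"
    "AE x in M. norm (F k x * D x) \<le> B * norm (D x)" for k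
    using D bound lim by (auto simp: abs_mult intro!: AE_I2 mult_right_mono tendsto_mult)
  show "integrable M (\<lambda>x. F' x * D x)"
    by (rule integrable_dominated_convergence[OF meas dominated])
  show "(\<lambda>k. integral\<^sup>L M (\<lambda>x. F k x * D x)) \<longlonglongrightarrow> integral\<^sup>L M (\<lambda>x. F' x * D x)"
    by (rule integral_dominated_convergence[OF meas dominated])
qed

lemma integral_norm_diff_sq_orthogonal:
  fixes U V :: "'a \<Rightarrow> 'b::euclidean_space"
  assumes meas: "U \<in> borel_measurable M" "V \<in> borel_measurable M"
    and sq: "integrable M (\<lambda>x. (norm (U x))\<^sup>2)" "integrable M (\<lambda>x. (norm (V x))\<^sup>2)"
    and orth: "integral\<^sup>L M (\<lambda>x. V x \<bullet> (V x - U x)) = 0"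
  shows "integral\<^sup>L M (\<lambda>x. (norm (U x - V x))\<^sup>2)
    = integral\<^sup>L M (\<lambda>x. (norm (U x))\<^sup>2) - integral\<^sup>L M (\<lambda>x. (norm (V x))\<^sup>2)"
proof -
  have "(norm (U x - V x))\<^sup>2 = (norm (U x))\<^sup>2 - (norm (V x))\<^sup>2 + 2 * (V x \<bullet> (V x - U x))" for x
    by (simp add: power2_norm_eq_inner algebra_simps inner_commute)
  moreover have "integrable M (\<lambda>x. V x \<bullet> (V x - U x))"
    using integrable_inner_square_integrable[OF meas(2,1) sq(2,1)] sq(2)
    by (simp add: inner_diff_right power2_norm_eq_inner)
  ultimately show ?thesis
    using sq orth by simp
qed

section \<open>Difference quotients\<close>

lemma has_derivative_directional:
  fixes f :: "'a::real_normed_vector \<Rightarrow> real"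
  assumes "(f has_derivative f') (at x)"
  shows "((\<lambda>t. f (x + t *\<^sub>R e)) has_real_derivative f' e) (at 0)"
proof -
  have "((\<lambda>t. x + t *\<^sub>R e) has_derivative (\<lambda>t. t *\<^sub>R e)) (at 0)"
    by (auto intro!: derivative_eq_intros)
  then have "((\<lambda>t. f (x + t *\<^sub>R e)) has_derivative (\<lambda>t. f' (t *\<^sub>R e))) (at 0)"
    using has_derivative_compose[of "\<lambda>t. x + t *\<^sub>R e" _ 0 UNIV f f'] assms by simp
  moreover have "(\<lambda>t. f' (t *\<^sub>R e)) = (*) (f' e)"
    using linear_scale[OF has_derivative_linear[OF assms]] by (auto simp: mult.commute)
  ultimately show ?thesis by (simp add: has_field_derivative_def)
qed

lemma difference_quotient_tendsto:
  fixes f :: "'a::real_normed_vector \<Rightarrow> real"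
  assumes "((\<lambda>t. f (x + t *\<^sub>R e)) has_real_derivative D) (at 0)"
    and "\<And>k. c k \<noteq> 0" "c \<longlonglongrightarrow> 0"
  shows "(\<lambda>k. (f (x + c k *\<^sub>R e) - f x) / c k) \<longlonglongrightarrow> D"
proof -
  have "(\<lambda>t. (f (x + t *\<^sub>R e) - f x) / t) \<midarrow>0\<rightarrow> D"
    using assms(1) unfolding DERIV_def by simp
  with assms(2,3) show ?thesis
    using LIMSEQ_SEQ_conv[of 0 "\<lambda>t. (f (x + t *\<^sub>R e) - f x) / t" D] by simp
qed

lemma difference_quotient_bound:
  fixes f f' :: "'a::real_normed_vector \<Rightarrow> real"
  assumes c: "c \<noteq> 0"
    and deriv: "\<And>t. min 0 c \<le> t \<Longrightarrow> t \<le> max 0 c \<Longrightarrow>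
              ((\<lambda>s. f ((x + t *\<^sub>R e) + s *\<^sub>R e)) has_real_derivative f' (x + t *\<^sub>R e)) (at 0)"
    and bound: "\<And>t. min 0 c \<le> t \<Longrightarrow> t \<le> max 0 c \<Longrightarrow> \<bar>f' (x + t *\<^sub>R e)\<bar> \<le> B"
  shows "\<bar>(f (x + c *\<^sub>R e) - f x) / c\<bar> \<le> B"
proof -
  have der: "DERIV (\<lambda>t. f (x + t *\<^sub>R e)) t :> f' (x + t *\<^sub>R e)"
    if "min 0 c \<le> t" "t \<le> max 0 c" for t
    using deriv[OF that] DERIV_shift[of "\<lambda>t. f (x + t *\<^sub>R e)" "f' (x + t *\<^sub>R e)" 0 t]
    by (simp add: algebra_simps)
  obtain z where "min 0 c < z" "z < max 0 c"
    and "f (x + c *\<^sub>R e) - f x = c * f' (x + z *\<^sub>R e)"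
  proof (cases "c > 0")
    case True
    with der MVT2[of 0 c "\<lambda>t. f (x + t *\<^sub>R e)" "\<lambda>t. f' (x + t *\<^sub>R e)"] that show ?thesis
      by force
  next
    case False
    with c der MVT2[of c 0 "\<lambda>t. f (x + t *\<^sub>R e)" "\<lambda>t. f' (x + t *\<^sub>R e)"] that show ?thesis
      by (force simp: algebra_simps)
  qed
  then show ?thesis
    using c bound[of z] by (simp add: abs_mult)
qed

lemma integral_difference_quotient_eq_0:
  fixes G :: "'a::euclidean_space \<Rightarrow> real"
  assumes G: "G \<in> borel_measurable lebesgue" "integrable lebesgue G"
  shows "integral\<^sup>L lebesgue (\<lambda>x. (G (x + c *\<^sub>R e) - G x) / c) = 0"
  using G integral_lebesgue_translate[OF G(1), of "c *\<^sub>R e"]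
    integrable_lebesgue_translate_iff[OF G(1), of "c *\<^sub>R e"]
  by (simp add: add.commute)

lemma integral_directional_derivative_eq_0:
  fixes G G' :: "'a::euclidean_space \<Rightarrow> real"
  assumes deriv: "\<And>x. ((\<lambda>t. G (x + t *\<^sub>R e)) has_real_derivative G' x) (at 0)"
    and bound: "\<And>x. \<bar>G' x\<bar> \<le> M"
    and cont: "continuous_on UNIV G"
    and K: "compact K" and supp: "\<And>x. x \<notin> K \<Longrightarrow> G x = 0"
  shows "integrable lebesgue G'" "integral\<^sup>L lebesgue G' = 0"
proof -
  define c :: "nat \<Rightarrow> real" where "c k = inverse (real (Suc k))" for k
  define q where "q k x = (G (x + c k *\<^sub>R e) - G x) / c k" for k x
  have c: "0 < c k" "c k \<le> 1" for k
    by (auto simp: c_def field_simps)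
  have G_meas: "G \<in> borel_measurable lebesgue"
    using continuous_imp_measurable_on_sets_lebesgue[OF cont] by (simp add: lebesgue_on_UNIV_eq)
  have "integrable lebesgue G"
    using integrable_continuous_compact_support[OF cont _ K subset_UNIV supp]
    by (simp add: lebesgue_on_UNIV_eq)
  then have integral_q: "integral\<^sup>L lebesgue (q k) = 0" for k
    unfolding q_def[abs_def] by (rule integral_difference_quotient_eq_0[OF G_meas])
  have q_meas: "q k \<in> borel_measurable lebesgue" for k
    using borel_measurable_lebesgue_translate[OF G_meas, of "c k *\<^sub>R e"] G_meas
    unfolding q_def by (simp add: add.commute)
  have q_lim: "(\<lambda>k. q k x) \<longlonglongrightarrow> G' x" for x
    unfolding q_def using c LIMSEQ_inverse_real_of_nat
    by (intro difference_quotient_tendsto[OF deriv]) (auto simp: c_def)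
  \<comment> \<open>the difference quotients all vanish outside a fixed compact neighbourhood of K\<close>
  define K' where "K' = (\<lambda>p. fst p + snd p *\<^sub>R e) ` (K \<times> {-1..0})"
  have K': "compact K'"
    unfolding K'_def by (intro compact_continuous_image compact_Times K compact_Icc continuous_intros)
  have q_bound: "\<bar>q k x\<bar> \<le> M * indicator K' x" for k x
  proof (cases "x \<in> K'")
    case True
    have "\<bar>q k x\<bar> \<le> M"
      unfolding q_def using c[of k] deriv bound
      by (intro difference_quotient_bound[where f' = G']) auto
    with True show ?thesis by simp
  next
    case False
    have "x \<notin> K"
      using False image_eqI[of x "\<lambda>p. fst p + snd p *\<^sub>R e" "(x, 0)" "K \<times> {-1..0}"]
      by (auto simp: K'_def)
    moreover have "x + c k *\<^sub>R e \<notin> K"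
      using False c[of k] image_eqI[of x "\<lambda>p. fst p + snd p *\<^sub>R e" "(x + c k *\<^sub>R e, - c k)"]
      by (auto simp: K'_def)
    ultimately show ?thesis
      using False by (simp add: q_def supp)
  qed
  have G'_meas: "G' \<in> borel_measurable lebesgue"
    by (rule borel_measurable_LIMSEQ_real[OF q_lim q_meas])
  have dominant: "integrable lebesgue (\<lambda>x. M * indicator K' x)"
    using fmeasurable_compact[OF K'] by (auto simp: fmeasurable_def)
  show "integrable lebesgue G'"
    using q_bound q_lim
    by (intro integrable_dominated_convergence[where s = q, OF G'_meas q_meas dominant]) auto
  have "(\<lambda>k. integral\<^sup>L lebesgue (q k)) \<longlonglongrightarrow> integral\<^sup>L lebesgue G'"
    using q_bound q_lim
    by (intro integral_dominated_convergence[where s = q, OF G'_meas q_meas dominant]) auto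
  then show "integral\<^sup>L lebesgue G' = 0"
    using integral_q by (simp add: LIMSEQ_const_iff)
qed

section \<open>Test functions\<close>

definition supp :: "('a::topological_space \<Rightarrow> real) \<Rightarrow> 'a set" where
  "supp phi = closure {x. phi x \<noteq> 0}"

lemma
  fixes phi :: "real^'n::finite \<Rightarrow> real"
  assumes "test_fun S phi dphi"
  shows test_fun_has_derivative: "(phi has_derivative (\<lambda>v. dphi x \<bullet> v)) (at x)"
    and test_fun_continuous_grad: "continuous_on UNIV dphi"
    and test_fun_compact_supp: "compact (supp phi)"
    and test_fun_supp_subset: "supp phi \<subseteq> S"
    and test_fun_continuous: "continuous_on UNIV phi"
    and test_fun_eq_0: "y \<notin> supp phi \<Longrightarrow> phi y = 0"
    and test_fun_grad_eq_0: "y \<notin> supp phi \<Longrightarrow> dphi y = 0"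
proof -
  show d: "\<And>x. (phi has_derivative (\<lambda>v. dphi x \<bullet> v)) (at x)"
    and "continuous_on UNIV dphi" "compact (supp phi)" "supp phi \<subseteq> S"
    using assms unfolding test_fun_def supp_def by auto
  then show "continuous_on UNIV phi"
    by (intro continuous_at_imp_continuous_on ballI has_derivative_continuous[OF d])
  show zero: "\<And>y. y \<notin> supp phi \<Longrightarrow> phi y = 0"
    using closure_subset[of "{x. phi x \<noteq> 0}"] unfolding supp_def by auto
  assume y: "y \<notin> supp phi"
  have "open (- supp phi)"
    by (simp add: supp_def open_Compl)
  then have "(phi has_derivative (\<lambda>v. 0)) (at y)"
    using y zero has_derivative_transform_within_open[of "\<lambda>_. 0" "\<lambda>v. 0" y UNIV "- supp phi" phi]
    by auto
  then have "(\<lambda>v. dphi y \<bullet> v) = (\<lambda>v. 0)"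
    by (rule has_derivative_unique[OF d])
  then have "dphi y \<bullet> dphi y = 0"
    by (rule fun_cong)
  then show "dphi y = 0"
    by simp
qed

lemma test_fun_grad_bound:
  fixes phi :: "real^'n::finite \<Rightarrow> real"
  assumes "test_fun S phi dphi"
  obtains B where "B \<ge> 0" "\<And>x. norm (dphi x) \<le> B"
proof -
  note F = test_fun_continuous_grad[OF assms] test_fun_compact_supp[OF assms]
    test_fun_grad_eq_0[OF assms]
  obtain B where "B \<ge> 0" "\<forall>x. norm (dphi x) \<le> B"
    using compact_support_norm_bound[OF F] by blast
  then show ?thesis
    using that[of B] by simp
qed

lemma
  fixes phi :: "real^'n::finite \<Rightarrow> real"
  assumes tf: "test_fun S phi dphi"
  shows test_fun_integrable_sq: "integrable lebesgue (\<lambda>x. (phi x)\<^sup>2)"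
    and test_fun_integrable_grad_sq: "integrable lebesgue (\<lambda>x. (norm (dphi x))\<^sup>2)"
proof -
  have int: "integrable lebesgue f"
    if "continuous_on UNIV f" "\<And>x. x \<notin> supp phi \<Longrightarrow> f x = 0" for f :: "real^'n \<Rightarrow> real"
  proof -
    have "integrable (lebesgue_on UNIV) f"
      by (rule integrable_continuous_compact_support[OF that(1)])
        (use test_fun_compact_supp[OF tf] that(2) in auto)
    then show ?thesis
      by (simp add: lebesgue_on_UNIV_eq)
  qed
  show "integrable lebesgue (\<lambda>x. (phi x)\<^sup>2)"
    by (rule int) (use test_fun_continuous[OF tf] test_fun_eq_0[OF tf] in \<open>auto intro: continuous_intros\<close>)
  show "integrable lebesgue (\<lambda>x. (norm (dphi x))\<^sup>2)"
    by (rule int)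
      (use test_fun_continuous_grad[OF tf] test_fun_grad_eq_0[OF tf] in \<open>auto intro: continuous_intros\<close>)
qed

lemma integration_by_parts_test_fun:
  fixes phi f :: "real^'n::finite \<Rightarrow> real"
  assumes tf: "test_fun S phi dphi" and S: "open S"
    and f: "\<And>x. x \<in> S \<Longrightarrow> (f has_derivative f' x) (at x)"
    and f'_cont: "continuous_on S (\<lambda>x. f' x e)"
  shows "integrable lebesgue (\<lambda>x. f' x e * phi x + f x * (dphi x \<bullet> e))"
    and "integral\<^sup>L lebesgue (\<lambda>x. f' x e * phi x + f x * (dphi x \<bullet> e)) = 0"
proof -
  define K where "K = supp phi"
  have K: "compact K" "K \<subseteq> S"
    using tf by (auto simp: K_def test_fun_compact_supp test_fun_supp_subset)
  have vanish: "phi x = 0" "dphi x = 0" if "x \<notin> K" for x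
    using that tf by (auto simp: K_def test_fun_eq_0 test_fun_grad_eq_0)
  define G where "G x = f x * phi x" for x
  define G' where "G' x = f' x e * phi x + f x * (dphi x \<bullet> e)" for x
  have f_cont: "continuous_on S f"
    using f by (intro continuous_at_imp_continuous_on ballI has_derivative_continuous) auto
  have deriv: "((\<lambda>t. G (x + t *\<^sub>R e)) has_real_derivative G' x) (at 0)" for x
  proof (cases "x \<in> K")
    case True
    then have "(G has_derivative (\<lambda>v. f x * (dphi x \<bullet> v) + f' x v * phi x)) (at x)"
      unfolding G_def using K f[of x] test_fun_has_derivative[OF tf, of x]
      by (auto intro: has_derivative_mult)
    from has_derivative_directional[OF this, of e] show ?thesis
      by (simp add: G'_def algebra_simps)
  next
    case False
    have "open (- K)"
      using K by (simp add: compact_imp_closed open_Compl)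
    then have "(G has_derivative (\<lambda>v. 0)) (at x)"
      using False vanish has_derivative_transform_within_open[of "\<lambda>_. 0" "\<lambda>v. 0" x UNIV "- K" G]
      by (auto simp: G_def)
    from has_derivative_directional[OF this, of e] show ?thesis
      using False vanish by (simp add: G'_def)
  qed
  have "continuous_on S G'"
    unfolding G'_def using f_cont f'_cont test_fun_continuous[OF tf] test_fun_continuous_grad[OF tf]
    by (intro continuous_intros) (auto intro: continuous_on_subset)
  then obtain M where bound: "\<And>x. \<bar>G' x\<bar> \<le> M"
    using compact_support_norm_bound[OF continuous_on_compact_support_UNIV[OF S K] K(1)] vanish
    by (fastforce simp: G'_def)
  have "continuous_on UNIV G"
    unfolding G_def using f_cont test_fun_continuous[OF tf] vanish
    by (intro continuous_on_compact_support_UNIV[OF S K] continuous_intros)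
      (auto intro: continuous_on_subset)
  from integral_directional_derivative_eq_0[OF deriv bound this K(1)] vanish
  show "integrable lebesgue (\<lambda>x. f' x e * phi x + f x * (dphi x \<bullet> e))"
    and "integral\<^sup>L lebesgue (\<lambda>x. f' x e * phi x + f x * (dphi x \<bullet> e)) = 0"
    by (auto simp: G_def G'_def[abs_def])
qed

lemma poincare_test_fun:
  fixes phi :: "real^'n::finite \<Rightarrow> real"
  assumes tf: "test_fun (ball 0 r) phi dphi"
  shows "integral\<^sup>L lebesgue (\<lambda>x. (phi x)\<^sup>2) \<le> 4 * r\<^sup>2 * integral\<^sup>L lebesgue (\<lambda>x. (norm (dphi x))\<^sup>2)"
proof -
  fix i :: 'n
  define f' where "f' x v = v $ i * phi x + x $ i * (dphi x \<bullet> v)" for x v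
  have deriv: "((\<lambda>x. x $ i * phi x) has_derivative f' x) (at x)" for x
    unfolding f'_def using test_fun_has_derivative[OF tf, of x]
      bounded_linear.has_derivative[OF bounded_linear_vec_nth[of i] has_derivative_ident]
    by (auto intro!: derivative_eq_intros)
  have cont: "continuous_on (ball 0 r) (\<lambda>x. f' x (axis i 1))"
    unfolding f'_def using test_fun_continuous[OF tf] test_fun_continuous_grad[OF tf]
    by (auto intro!: continuous_intros simp: inner_axis intro: continuous_on_subset)
  note ibp = integration_by_parts_test_fun[OF tf open_ball deriv cont]
  define Q where "Q x = (phi x)\<^sup>2 + 2 * (x $ i * phi x * dphi x $ i)" for x
  have Q: "integrable lebesgue Q" "integral\<^sup>L lebesgue Q = 0"
    using ibp unfolding Q_def f'_def by (simp_all add: inner_axis power2_eq_square algebra_simps)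
  \<comment> \<open>Q is the derivative of x_i phi^2 in direction x_i; on the support of phi, |x_i| < r\<close>
  have pointwise: "(phi x)\<^sup>2 \<le> Q x + (phi x)\<^sup>2 / 2 + 2 * r\<^sup>2 * (norm (dphi x))\<^sup>2" for x
  proof (cases "x \<in> ball 0 r")
    case True
    then have "\<bar>x $ i\<bar> \<le> \<bar>r\<bar>"
      using component_le_norm_cart[of x i] by simp
    then have "(x $ i * dphi x $ i)\<^sup>2 \<le> r\<^sup>2 * (norm (dphi x))\<^sup>2"
      using component_le_norm_cart[of "dphi x" i]
      by (simp add: power_mult_distrib abs_le_square_iff[symmetric] mult_mono abs_mult)
    moreover have "0 \<le> (phi x / 2 + x $ i * dphi x $ i)\<^sup>2"
      by simp
    ultimately show ?thesis
      unfolding Q_def by (simp add: power2_eq_square algebra_simps; linarith)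
  next
    case False
    then have "phi x = 0"
      using test_fun_eq_0[OF tf] test_fun_supp_subset[OF tf] by blast
    then show ?thesis
      unfolding Q_def by simp
  qed
  have "integral\<^sup>L lebesgue (\<lambda>x. (phi x)\<^sup>2)
      \<le> integral\<^sup>L lebesgue (\<lambda>x. Q x + (phi x)\<^sup>2 / 2 + 2 * r\<^sup>2 * (norm (dphi x))\<^sup>2)"
    using Q test_fun_integrable_sq[OF tf] test_fun_integrable_grad_sq[OF tf] pointwise
    by (intro integral_mono) auto
  also have "\<dots> = integral\<^sup>L lebesgue (\<lambda>x. (phi x)\<^sup>2) / 2
      + 2 * r\<^sup>2 * integral\<^sup>L lebesgue (\<lambda>x. (norm (dphi x))\<^sup>2)"
    using Q test_fun_integrable_sq[OF tf] test_fun_integrable_grad_sq[OF tf] by simp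
  finally show ?thesis
    by simp
qed

lemma test_fun_difference_quotient_tendsto:
  fixes phi :: "real^'n::finite \<Rightarrow> real"
  assumes tf: "test_fun S phi dphi" and "\<And>k. c k \<noteq> 0" "c \<longlonglongrightarrow> 0"
  shows "(\<lambda>k. (phi (x + c k *\<^sub>R e) - phi x) / c k) \<longlonglongrightarrow> dphi x \<bullet> e"
  using difference_quotient_tendsto[OF has_derivative_directional[OF test_fun_has_derivative[OF tf]]]
    assms(2,3) by blast

lemma test_fun_difference_quotient_bounded:
  fixes phi :: "real^'n::finite \<Rightarrow> real"
  assumes tf: "test_fun S phi dphi" and c: "\<And>k. c k \<noteq> 0"
  shows "\<exists>B. \<forall>k x. \<bar>(phi (x + c k *\<^sub>R e) - phi x) / c k\<bar> \<le> B"
proof -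
  obtain B where "\<And>x. norm (dphi x) \<le> B"
    using test_fun_grad_bound[OF tf] by blast
  then have "\<bar>dphi y \<bullet> e\<bar> \<le> B * norm e" for y
    using Cauchy_Schwarz_ineq2[of "dphi y" e] by (meson mult_right_mono norm_ge_zero order_trans)
  then have "\<bar>(phi (x + c k *\<^sub>R e) - phi x) / c k\<bar> \<le> B * norm e" for k x
    using c has_derivative_directional[OF test_fun_has_derivative[OF tf]]
    by (intro difference_quotient_bound[where f' = "\<lambda>y. dphi y \<bullet> e"]) auto
  then show ?thesis
    by blast
qed

lemma test_fun_difference_quotient:
  fixes phi :: "real^'n::finite \<Rightarrow> real"
  assumes tf: "test_fun S phi dphi" and c: "c \<noteq> 0"
    and shift: "(\<lambda>x. x - c *\<^sub>R e) ` supp phi \<subseteq> S"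
  shows "test_fun S (\<lambda>x. (phi (x + c *\<^sub>R e) - phi x) / c)
      (\<lambda>x. (1 / c) *\<^sub>R (dphi (x + c *\<^sub>R e) - dphi x))"
proof -
  let ?psi = "\<lambda>x. (phi (x + c *\<^sub>R e) - phi x) / c"
  let ?dpsi = "\<lambda>x. (1 / c) *\<^sub>R (dphi (x + c *\<^sub>R e) - dphi x)"
  define K where "K = supp phi \<union> (\<lambda>x. x - c *\<^sub>R e) ` supp phi"
  have K: "compact K" "K \<subseteq> S"
    using test_fun_compact_supp[OF tf] test_fun_supp_subset[OF tf] shift unfolding K_def
    by (auto intro!: compact_Un compact_continuous_image continuous_intros)
  have "(?psi has_derivative (\<lambda>v. ?dpsi x \<bullet> v)) (at x)" for x
  proof -
    have "((\<lambda>x. phi (x + c *\<^sub>R e)) has_derivative (\<lambda>v. dphi (x + c *\<^sub>R e) \<bullet> v)) (at x)"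
      using has_derivative_compose[of "\<lambda>x. x + c *\<^sub>R e" "\<lambda>v. v" x UNIV phi]
        test_fun_has_derivative[OF tf] by (simp add: has_derivative_add_const)
    then have "(?psi has_derivative (\<lambda>v. (dphi (x + c *\<^sub>R e) \<bullet> v - dphi x \<bullet> v) / c)) (at x)"
      using test_fun_has_derivative[OF tf] c by (intro derivative_eq_intros) auto
    then show ?thesis
      by (simp add: inner_diff_left divide_inverse mult.commute)
  qed
  moreover have "continuous_on UNIV ?dpsi"
    using test_fun_continuous_grad[OF tf]
    by (intro continuous_intros continuous_on_compose2[OF test_fun_continuous_grad[OF tf]]) auto
  moreover have sub: "{x. ?psi x \<noteq> 0} \<subseteq> K"
  proof
    fix x
    assume "x \<in> {x. ?psi x \<noteq> 0}"
    then have "x + c *\<^sub>R e \<in> supp phi \<or> x \<in> supp phi"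
      using test_fun_eq_0[OF tf] by force
    then show "x \<in> K"
      unfolding K_def using image_eqI[of x "\<lambda>x. x - c *\<^sub>R e" "x + c *\<^sub>R e"] by auto
  qed
  moreover have "closure {x. ?psi x \<noteq> 0} \<subseteq> K"
    by (rule closure_minimal[OF sub compact_imp_closed[OF K(1)]])
  moreover have "compact (closure {x. ?psi x \<noteq> 0})"
    unfolding compact_closure by (rule bounded_subset[OF compact_imp_bounded[OF K(1)] sub])
  ultimately show ?thesis
    using K unfolding test_fun_def by blast
qed

lemma difference_quotients_test_fun:
  fixes phi :: "real^'n::finite \<Rightarrow> real"
  assumes tf: "test_fun S phi dphi" and S: "open S" and e: "norm e = 1"
  obtains c :: "nat \<Rightarrow> real" and K where "\<And>k. c k \<noteq> 0" "c \<longlonglongrightarrow> 0" "compact K" "K \<subseteq> S"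
    "supp phi \<subseteq> K"
    "\<And>k. test_fun S (\<lambda>x. (phi (x + c k *\<^sub>R e) - phi x) / c k)
      (\<lambda>x. (1 / c k) *\<^sub>R (dphi (x + c k *\<^sub>R e) - dphi x))"
    "\<And>k x. x \<notin> K \<Longrightarrow> phi (x + c k *\<^sub>R e) = 0"
proof -
  note supp = test_fun_compact_supp[OF tf] test_fun_supp_subset[OF tf]
  obtain d where d: "d > 0" "(\<Union>x\<in>supp phi. cball x d) \<subseteq> S"
    using compact_subset_open_imp_cball_epsilon_subset[OF supp(1) S supp(2)] by blast
  define c where "c k = d / real (Suc (Suc k))" for k
  have c: "0 < c k" "c k < d" for k
    using d(1) by (auto simp: c_def field_simps add_pos_nonneg)
  have "(\<lambda>k. d * inverse (real (Suc (Suc k)))) \<longlonglongrightarrow> d * 0"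
    by (intro tendsto_mult tendsto_const LIMSEQ_Suc[OF LIMSEQ_inverse_real_of_nat])
  then have c_lim: "c \<longlonglongrightarrow> 0"
    by (simp add: c_def[abs_def] divide_inverse)
  define K where "K = (\<lambda>p. fst p + snd p *\<^sub>R e) ` (supp phi \<times> {-d..0})"
  have K: "compact K"
    unfolding K_def by (intro compact_continuous_image compact_Times supp(1) compact_Icc continuous_intros)
  have shifted: "y + t *\<^sub>R e \<in> K" if "y \<in> supp phi" "t \<in> {-d..0}" for y t
    unfolding K_def using that by (intro image_eqI[of _ _ "(y, t)"]) auto
  have K_S: "K \<subseteq> S"
  proof
    fix x
    assume "x \<in> K"
    then obtain y t where y: "y \<in> supp phi" and "t \<in> {-d..0}" "x = y + t *\<^sub>R e"
      unfolding K_def by auto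
    then have "x \<in> cball y d"
      using e by (auto simp: dist_norm)
    with y d(2) show "x \<in> S"
      by blast
  qed
  have supp_K: "supp phi \<subseteq> K"
    using shifted[of _ 0] d(1) by auto
  have tf_k: "test_fun S (\<lambda>x. (phi (x + c k *\<^sub>R e) - phi x) / c k)
      (\<lambda>x. (1 / c k) *\<^sub>R (dphi (x + c k *\<^sub>R e) - dphi x))" for k
  proof (rule test_fun_difference_quotient[OF tf])
    show "c k \<noteq> 0"
      using c[of k] by simp
    show "(\<lambda>x. x - c k *\<^sub>R e) ` supp phi \<subseteq> S"
      using c[of k] shifted[of _ "- c k"] K_S by auto
  qed
  have vanish: "phi (x + c k *\<^sub>R e) = 0" if "x \<notin> K" for k x
  proof (rule test_fun_eq_0[OF tf])
    show "x + c k *\<^sub>R e \<notin> supp phi"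
      using shifted[of "x + c k *\<^sub>R e" "- c k"] c[of k] that by auto
  qed
  show ?thesis
    by (rule that[OF _ c_lim K K_S supp_K tf_k vanish]) (use c in \<open>simp add: less_imp_neq[symmetric]\<close>)
qed

section \<open>Weak gradients of harmonic functions\<close>

lemma weak_grad_component:
  fixes u :: "real^'n::finite \<Rightarrow> real"
  assumes S: "S \<in> sets lebesgue" and H: "H1 S u Du" and tf: "test_fun S phi dphi"
  shows "integrable (lebesgue_on S) (\<lambda>x. u x * dphi x $ i)"
    and "integrable (lebesgue_on S) (\<lambda>x. phi x * Du x $ i)"
    and "integral\<^sup>L (lebesgue_on S) (\<lambda>x. u x * dphi x $ i)
      = - integral\<^sup>L (lebesgue_on S) (\<lambda>x. phi x * Du x $ i)"
proof -
  let ?\<Omega> = "lebesgue_on S"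
  have u: "u \<in> borel_measurable ?\<Omega>" "integrable ?\<Omega> (\<lambda>x. (u x)\<^sup>2)"
    and Du: "Du \<in> borel_measurable ?\<Omega>" "integrable ?\<Omega> (\<lambda>x. (norm (Du x))\<^sup>2)"
    and weak: "weak_grad S u Du"
    using H by (auto simp: H1_def)
  have phi: "phi \<in> borel_measurable ?\<Omega>" "dphi \<in> borel_measurable ?\<Omega>"
    using test_fun_continuous[OF tf] test_fun_continuous_grad[OF tf]
    by (auto intro: continuous_imp_borel_measurable_lebesgue_on)
  have phi_sq: "integrable ?\<Omega> (\<lambda>x. (phi x)\<^sup>2)" "integrable ?\<Omega> (\<lambda>x. (norm (dphi x))\<^sup>2)"
    using integrable_imp_integrable_lebesgue_on[OF S] test_fun_integrable_sq[OF tf]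
      test_fun_integrable_grad_sq[OF tf]
    by blast+
  have int_u: "integrable ?\<Omega> (\<lambda>x. u x *\<^sub>R dphi x)"
  proof (rule Bochner_Integration.integrable_bound)
    show "integrable ?\<Omega> (\<lambda>x. u x * norm (dphi x))"
      using u phi(2) phi_sq(2) by (intro integrable_mult_square_integrable) auto
  qed (use u phi in auto)
  have int_Du: "integrable ?\<Omega> (\<lambda>x. phi x *\<^sub>R Du x)"
  proof (rule Bochner_Integration.integrable_bound)
    show "integrable ?\<Omega> (\<lambda>x. phi x * norm (Du x))"
      using Du phi(1) phi_sq(1) by (intro integrable_mult_square_integrable) auto
  qed (use Du phi in auto)
  have "integral\<^sup>L ?\<Omega> (\<lambda>x. u x *\<^sub>R dphi x) = - integral\<^sup>L ?\<Omega> (\<lambda>x. phi x *\<^sub>R Du x)"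
    using weak tf unfolding weak_grad_def by blast
  then show "integral\<^sup>L ?\<Omega> (\<lambda>x. u x * dphi x $ i) = - integral\<^sup>L ?\<Omega> (\<lambda>x. phi x * Du x $ i)"
    using integral_bounded_linear[OF bounded_linear_vec_nth int_u, of i]
      integral_bounded_linear[OF bounded_linear_vec_nth int_Du, of i]
    by simp
  show "integrable ?\<Omega> (\<lambda>x. u x * dphi x $ i)" "integrable ?\<Omega> (\<lambda>x. phi x * Du x $ i)"
    using integrable_bounded_linear[OF bounded_linear_vec_nth, of _ _ i] int_u int_Du by force+
qed

lemma weak_grad_eq_classical_grad_test_fun:
  fixes h :: "real^'n::finite \<Rightarrow> real"
  assumes S: "open S" and H: "H1 S h Dw"
    and h: "\<And>x. x \<in> S \<Longrightarrow> (h has_derivative (\<lambda>v. Dc x \<bullet> v)) (at x)"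
    and Dc: "continuous_on S Dc"
    and tf: "test_fun S psi dpsi"
  shows "integrable (lebesgue_on S) (\<lambda>x. psi x * Dc x $ i)"
    and "integral\<^sup>L (lebesgue_on S) (\<lambda>x. psi x * Dw x $ i)
      = integral\<^sup>L (lebesgue_on S) (\<lambda>x. psi x * Dc x $ i)"
proof -
  have S_sets: "S \<in> sets lebesgue"
    using S by simp
  have vanish: "x \<notin> S \<Longrightarrow> psi x = 0 \<and> dpsi x = 0" for x
    using tf test_fun_eq_0 test_fun_grad_eq_0 test_fun_supp_subset by blast
  note weak = weak_grad_component[OF S_sets H tf, of i]
  have "continuous_on S (\<lambda>x. Dc x \<bullet> axis i 1)"
    using Dc by (intro continuous_intros)
  note ibp = integration_by_parts_test_fun[OF tf S h this]
  have h_dpsi: "integrable lebesgue (\<lambda>x. h x * dpsi x $ i)"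
    "integral\<^sup>L (lebesgue_on S) (\<lambda>x. h x * dpsi x $ i) = integral\<^sup>L lebesgue (\<lambda>x. h x * dpsi x $ i)"
    using weak(1) integrable_lebesgue_on_iff[OF S_sets, of "\<lambda>x. h x * dpsi x $ i"]
      integral_lebesgue_on_eq[OF S_sets, of "\<lambda>x. h x * dpsi x $ i"] vanish
    by auto
  have "(\<lambda>x. psi x * Dc x $ i)
      = (\<lambda>x. (Dc x \<bullet> axis i 1 * psi x + h x * (dpsi x \<bullet> axis i 1)) - h x * dpsi x $ i)"
    by (simp add: inner_axis mult.commute)
  then have psi_Dc: "integrable lebesgue (\<lambda>x. psi x * Dc x $ i)"
    "integral\<^sup>L lebesgue (\<lambda>x. psi x * Dc x $ i) = - integral\<^sup>L lebesgue (\<lambda>x. h x * dpsi x $ i)"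
    using ibp h_dpsi(1) by simp_all
  show "integrable (lebesgue_on S) (\<lambda>x. psi x * Dc x $ i)"
    using psi_Dc(1) integrable_lebesgue_on_iff[OF S_sets, of "\<lambda>x. psi x * Dc x $ i"] vanish
    by auto
  show "integral\<^sup>L (lebesgue_on S) (\<lambda>x. psi x * Dw x $ i)
      = integral\<^sup>L (lebesgue_on S) (\<lambda>x. psi x * Dc x $ i)"
    using weak(3) h_dpsi(2) psi_Dc(2) integral_lebesgue_on_eq[OF S_sets, of "\<lambda>x. psi x * Dc x $ i"]
      vanish
    by auto
qed

lemma H1_continuous_diff_integrable_on_compact:
  fixes h :: "real^'n::finite \<Rightarrow> real"
  assumes S: "open S" and H: "H1 S h Dw" and Dc: "continuous_on S Dc" and K: "compact K" "K \<subseteq> S"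
  shows "integrable (lebesgue_on S) (\<lambda>x. indicator K x * (Dw x $ i - Dc x $ i))"
proof -
  let ?\<Omega> = "lebesgue_on S"
  have S_sets: "S \<in> sets lebesgue"
    using S by simp
  have Dw: "Dw \<in> borel_measurable ?\<Omega>" "integrable ?\<Omega> (\<lambda>x. (norm (Dw x))\<^sup>2)"
    using H by (auto simp: H1_def)
  then have Dw_i: "(\<lambda>x. Dw x $ i) \<in> borel_measurable ?\<Omega>"
    by measurable
  have "(Dw x $ i)\<^sup>2 \<le> (norm (Dw x))\<^sup>2" for x
    using power_mono[OF component_le_norm_cart[of "Dw x" i] abs_ge_zero, of 2] by simp
  then have "integrable ?\<Omega> (\<lambda>x. (Dw x $ i)\<^sup>2)"
    using Dw_i by (intro Bochner_Integration.integrable_bound[OF Dw(2)] AE_I2) auto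
  then have "integrable ?\<Omega> (\<lambda>x. indicator K x * Dw x $ i)"
    by (rule integrable_indicator_mult_square_integrable[OF K S_sets Dw_i])
  moreover have "integrable ?\<Omega> (\<lambda>x. indicator K x * Dc x $ i)"
  proof -
    obtain B where B: "\<And>x. x \<in> K \<Longrightarrow> norm (Dc x) \<le> B"
      using continuous_on_compact_norm_bound[OF Dc K] by blast
    have dominant: "integrable ?\<Omega> (\<lambda>x. B * indicator K x)"
      using K S_sets fmeasurable_compact[OF K(1)]
      by (auto simp: sets_restrict_space_iff emeasure_restrict_space fmeasurable_def)
    have "K \<in> sets ?\<Omega>"
      using K S_sets fmeasurable_compact[OF K(1)] by (auto simp: sets_restrict_space_iff fmeasurable_def)
    then have meas: "(\<lambda>x. indicator K x * Dc x $ i) \<in> borel_measurable ?\<Omega>"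
      using continuous_imp_measurable_on_sets_lebesgue[OF Dc S_sets] by measurable
    have "norm (indicator K x * Dc x $ i) \<le> norm (B * indicator K x)" for x
      using B[of x] component_le_norm_cart[of "Dc x" i] by (auto simp: indicator_def)
    then show ?thesis
      by (intro Bochner_Integration.integrable_bound[OF dominant meas] AE_I2)
  qed
  ultimately show ?thesis
    by (simp add: right_diff_distrib)
qed

lemma weak_grad_eq_classical_grad:
  fixes h :: "real^'n::finite \<Rightarrow> real"
  assumes S: "open S" and H: "H1 S h Dw"
    and h: "\<And>x. x \<in> S \<Longrightarrow> (h has_derivative (\<lambda>v. Dc x \<bullet> v)) (at x)"
    and Dc: "continuous_on S Dc"
    and tf: "test_fun S phi dphi"
  shows "integrable (lebesgue_on S) (\<lambda>x. dphi x $ i * Dw x $ i)"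
    and "integrable (lebesgue_on S) (\<lambda>x. dphi x $ i * Dc x $ i)"
    and "integral\<^sup>L (lebesgue_on S) (\<lambda>x. dphi x $ i * Dw x $ i)
      = integral\<^sup>L (lebesgue_on S) (\<lambda>x. dphi x $ i * Dc x $ i)"
proof -
  let ?\<Omega> = "lebesgue_on S"
  define e :: "real^'n" where "e = axis i 1"
  obtain c K where c: "\<And>k. c k \<noteq> 0" "c \<longlonglongrightarrow> 0" and K: "compact K" "K \<subseteq> S" "supp phi \<subseteq> K"
    and tf_k: "\<And>k. test_fun S (\<lambda>x. (phi (x + c k *\<^sub>R e) - phi x) / c k)
      (\<lambda>x. (1 / c k) *\<^sub>R (dphi (x + c k *\<^sub>R e) - dphi x))"
    and shift_vanish: "\<And>k x. x \<notin> K \<Longrightarrow> phi (x + c k *\<^sub>R e) = 0"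
    using difference_quotients_test_fun[OF tf S, of e] by (auto simp: e_def)
  define psi where "psi k x = (phi (x + c k *\<^sub>R e) - phi x) / c k" for k x
  define D where "D x = indicator K x * (Dw x $ i - Dc x $ i)" for x
  have vanish: "phi x = 0" "dphi x = 0" if "x \<notin> K" for x
    using that K(3) test_fun_eq_0[OF tf] test_fun_grad_eq_0[OF tf] by auto
  obtain B where psi_bound: "\<And>k x. \<bar>psi k x\<bar> \<le> B"
    unfolding psi_def using test_fun_difference_quotient_bounded[OF tf, of c e] c(1) by blast
  have psi_lim: "(\<lambda>k. psi k x) \<longlonglongrightarrow> dphi x $ i" for x
    using test_fun_difference_quotient_tendsto[OF tf c, of x e] by (simp add: psi_def e_def inner_axis)
  have D_int: "integrable ?\<Omega> D"
    unfolding D_def by (rule H1_continuous_diff_integrable_on_compact[OF S H Dc K(1,2)])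
  \<comment> \<open>the classical and the weak gradient agree when tested against the difference quotients\<close>
  have psi_D: "integral\<^sup>L ?\<Omega> (\<lambda>x. psi k x * D x) = 0" for k
  proof -
    have "(\<lambda>x. psi k x * D x) = (\<lambda>x. psi k x * Dw x $ i - psi k x * Dc x $ i)"
      by (auto simp: D_def psi_def indicator_def vanish shift_vanish algebra_simps)
    then show ?thesis
      using weak_grad_eq_classical_grad_test_fun[OF S H h Dc tf_k[of k], where i = i]
        weak_grad_component(2)[OF _ H tf_k[of k], where i = i] S
      by (simp add: psi_def[abs_def])
  qed
  have "psi k \<in> borel_measurable ?\<Omega>" for k
    unfolding psi_def[abs_def]
    by (rule continuous_imp_borel_measurable_lebesgue_on[OF test_fun_continuous[OF tf_k[of k]]])
  note limit = tendsto_integral_bounded_mult[OF D_int this psi_bound psi_lim]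
  have D_eq: "dphi x $ i * D x = dphi x $ i * Dw x $ i - dphi x $ i * Dc x $ i" for x
    by (auto simp: D_def indicator_def vanish algebra_simps)
  show Dc_int: "integrable ?\<Omega> (\<lambda>x. dphi x $ i * Dc x $ i)"
    using test_fun_continuous_grad[OF tf] vanish(2) S
    by (intro integrable_continuous_compact_support[OF _ _ K(1,2)])
      (auto intro!: continuous_intros Dc intro: continuous_on_subset)
  show Dw_int: "integrable ?\<Omega> (\<lambda>x. dphi x $ i * Dw x $ i)"
    using Bochner_Integration.integrable_add[OF limit(1) Dc_int] by (simp add: D_eq)
  have "integral\<^sup>L ?\<Omega> (\<lambda>x. dphi x $ i * D x) = 0"
    using limit(2) psi_D by (simp add: LIMSEQ_const_iff)
  then show "integral\<^sup>L ?\<Omega> (\<lambda>x. dphi x $ i * Dw x $ i) = integral\<^sup>L ?\<Omega> (\<lambda>x. dphi x $ i * Dc x $ i)"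
    using Dw_int Dc_int by (simp add: D_eq)
qed

lemma classical_harmonic_grad_orthogonal_test_fun:
  fixes phi :: "real^'n::finite \<Rightarrow> real"
  assumes S: "open S" and tf: "test_fun S phi dphi"
    and D2h: "\<And>x. x \<in> S \<Longrightarrow> (Dh has_derivative D2h x) (at x)"
    and D2h_cont: "continuous_on S (\<lambda>x. \<chi> i j. D2h x (axis j 1) $ i)"
    and laplace: "\<And>x. x \<in> S \<Longrightarrow> (\<Sum>i\<in>UNIV. D2h x (axis i 1) $ i) = 0"
  shows "integrable lebesgue (\<lambda>x. Dh x \<bullet> dphi x)" "integral\<^sup>L lebesgue (\<lambda>x. Dh x \<bullet> dphi x) = 0"
proof -
  have "((\<lambda>y. Dh y $ i) has_derivative (\<lambda>v. D2h x v $ i)) (at x)" if "x \<in> S" for i x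
    by (rule bounded_linear.has_derivative[OF bounded_linear_vec_nth D2h[OF that]])
  moreover have "continuous_on S (\<lambda>x. D2h x (axis i 1) $ i)" for i
  proof -
    have "continuous_on S (\<lambda>x. (\<chi> i j. D2h x (axis j 1) $ i) $ i $ i)"
      by (intro continuous_intros D2h_cont)
    then show ?thesis
      by simp
  qed
  ultimately have ibp: "integrable lebesgue (\<lambda>x. D2h x (axis i 1) $ i * phi x + Dh x $ i * dphi x $ i)"
    "integral\<^sup>L lebesgue (\<lambda>x. D2h x (axis i 1) $ i * phi x + Dh x $ i * dphi x $ i) = 0" for i
    using integration_by_parts_test_fun[OF tf S, of "\<lambda>y. Dh y $ i" "\<lambda>x v. D2h x v $ i" "axis i 1"]
    by (simp_all add: inner_axis)
  have "Dh x \<bullet> dphi x = (\<Sum>i\<in>UNIV. D2h x (axis i 1) $ i * phi x + Dh x $ i * dphi x $ i)" for x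
  proof (cases "x \<in> S")
    case True
    then show ?thesis
      using laplace[OF True] by (simp add: sum.distrib inner_vec_def flip: sum_distrib_right)
  next
    case False
    then have "phi x = 0"
      using tf test_fun_eq_0 test_fun_supp_subset by blast
    then show ?thesis
      by (simp add: inner_vec_def)
  qed
  then show "integrable lebesgue (\<lambda>x. Dh x \<bullet> dphi x)" "integral\<^sup>L lebesgue (\<lambda>x. Dh x \<bullet> dphi x) = 0"
    using ibp by simp_all
qed

lemma harmonic_on_weak_grad_orthogonal_test_fun:
  fixes h :: "real^'n::finite \<Rightarrow> real"
  assumes S: "open S" and harmonic: "harmonic_on S h" and H: "H1 S h Dh"
    and tf: "test_fun S phi dphi"
  shows "integrable (lebesgue_on S) (\<lambda>x. Dh x \<bullet> dphi x)"
    and "integral\<^sup>L (lebesgue_on S) (\<lambda>x. Dh x \<bullet> dphi x) = 0"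
proof -
  let ?\<Omega> = "lebesgue_on S"
  obtain Dc D2h where h: "\<And>x. x \<in> S \<Longrightarrow> (h has_derivative (\<lambda>v. Dc x \<bullet> v)) (at x)"
    and D2h: "\<And>x. x \<in> S \<Longrightarrow> (Dc has_derivative D2h x) (at x)"
    and D2h_cont: "continuous_on S (\<lambda>x. \<chi> i j. D2h x (axis j 1) $ i)"
    and laplace: "\<And>x. x \<in> S \<Longrightarrow> (\<Sum>i\<in>UNIV. D2h x (axis i 1) $ i) = 0"
    using harmonic unfolding harmonic_on_def by blast
  have "continuous_on S Dc"
    using D2h by (intro continuous_at_imp_continuous_on ballI has_derivative_continuous) auto
  note weak = weak_grad_eq_classical_grad[OF S H h this tf]
  have inner_sum: "(\<lambda>x. D x \<bullet> dphi x) = (\<lambda>x. \<Sum>i\<in>UNIV. dphi x $ i * D x $ i)" for D :: "real^'n \<Rightarrow> real^'n"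
    by (auto simp: inner_vec_def mult.commute)
  show "integrable ?\<Omega> (\<lambda>x. Dh x \<bullet> dphi x)"
    unfolding inner_sum using weak(1) by auto
  have "integral\<^sup>L ?\<Omega> (\<lambda>x. Dh x \<bullet> dphi x) = (\<Sum>i\<in>UNIV. integral\<^sup>L ?\<Omega> (\<lambda>x. dphi x $ i * Dh x $ i))"
    unfolding inner_sum using weak(1) by (simp add: Bochner_Integration.integral_sum)
  also have "\<dots> = (\<Sum>i\<in>UNIV. integral\<^sup>L ?\<Omega> (\<lambda>x. dphi x $ i * Dc x $ i))"
    using weak(3) by simp
  also have "\<dots> = integral\<^sup>L ?\<Omega> (\<lambda>x. Dc x \<bullet> dphi x)"
    unfolding inner_sum using weak(2) by (simp add: Bochner_Integration.integral_sum)
  also have "\<dots> = integral\<^sup>L lebesgue (\<lambda>x. Dc x \<bullet> dphi x)"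
  proof (rule integral_lebesgue_on_eq)
    show "Dc x \<bullet> dphi x = 0" if "x \<notin> S" for x
      using that test_fun_grad_eq_0[OF tf] test_fun_supp_subset[OF tf] by (metis inner_zero_right subsetD)
  qed (use S in simp)
  also have "\<dots> = 0"
    by (rule classical_harmonic_grad_orthogonal_test_fun(2)[OF S tf D2h D2h_cont laplace])
  finally show "integral\<^sup>L ?\<Omega> (\<lambda>x. Dh x \<bullet> dphi x) = 0" .
qed

lemma H1_0_test_fun_approximation:
  fixes w :: "real^'n::finite \<Rightarrow> real"
  assumes S: "S \<in> sets lebesgue" and w: "H1_0 S w Dw"
  obtains phi dphi where "\<And>k. test_fun S (phi k) (dphi k)"
    "(\<lambda>k. integral\<^sup>L (lebesgue_on S) (\<lambda>x. (phi k x - w x)\<^sup>2)) \<longlonglongrightarrow> 0"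
    "(\<lambda>k. integral\<^sup>L (lebesgue_on S) (\<lambda>x. (norm (dphi k x - Dw x))\<^sup>2)) \<longlonglongrightarrow> 0"
proof -
  let ?\<Omega> = "lebesgue_on S"
  obtain phi dphi where tf: "\<And>k. test_fun S (phi k) (dphi k)"
    and lim: "(\<lambda>k. integral\<^sup>L ?\<Omega> (\<lambda>x. (phi k x - w x)\<^sup>2 + (norm (dphi k x - Dw x))\<^sup>2)) \<longlonglongrightarrow> 0"
    using w unfolding H1_0_def by blast
  have H: "w \<in> borel_measurable ?\<Omega>" "Dw \<in> borel_measurable ?\<Omega>"
    "integrable ?\<Omega> (\<lambda>x. (w x)\<^sup>2)" "integrable ?\<Omega> (\<lambda>x. (norm (Dw x))\<^sup>2)"
    using w by (auto simp: H1_0_def H1_def)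
  have int1: "integrable ?\<Omega> (\<lambda>x. (phi k x - w x)\<^sup>2)" for k
    using integrable_norm_diff_sq[of "phi k" ?\<Omega> w] H
      continuous_imp_borel_measurable_lebesgue_on[OF test_fun_continuous[OF tf[of k]]]
      integrable_imp_integrable_lebesgue_on[OF S test_fun_integrable_sq[OF tf[of k]]]
    by simp
  have int2: "integrable ?\<Omega> (\<lambda>x. (norm (dphi k x - Dw x))\<^sup>2)" for k
    using integrable_norm_diff_sq[of "dphi k" ?\<Omega> Dw] H
      continuous_imp_borel_measurable_lebesgue_on[OF test_fun_continuous_grad[OF tf[of k]]]
      integrable_imp_integrable_lebesgue_on[OF S test_fun_integrable_grad_sq[OF tf[of k]]]
    by simp
  have "(\<lambda>k. integral\<^sup>L ?\<Omega> (\<lambda>x. (phi k x - w x)\<^sup>2)) \<longlonglongrightarrow> 0"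
    using int1 int2 by (intro tendsto_sandwich[OF _ _ tendsto_const lim] always_eventually allI) auto
  moreover have "(\<lambda>k. integral\<^sup>L ?\<Omega> (\<lambda>x. (norm (dphi k x - Dw x))\<^sup>2)) \<longlonglongrightarrow> 0"
    using int1 int2 by (intro tendsto_sandwich[OF _ _ tendsto_const lim] always_eventually allI) auto
  ultimately show ?thesis
    using that tf by blast
qed

lemma poincare_H1_0:
  fixes w :: "real^'n::finite \<Rightarrow> real"
  assumes w: "H1_0 (ball 0 r) w Dw"
  shows "integral\<^sup>L (lebesgue_on (ball 0 r)) (\<lambda>x. (w x)\<^sup>2)
    \<le> 4 * r\<^sup>2 * integral\<^sup>L (lebesgue_on (ball 0 r)) (\<lambda>x. (norm (Dw x))\<^sup>2)"
proof -
  let ?\<Omega> = "lebesgue_on (ball (0::real^'n) r)"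
  have S: "ball (0::real^'n) r \<in> sets lebesgue"
    by simp
  obtain phi dphi where tf: "\<And>k. test_fun (ball 0 r) (phi k) (dphi k)"
    and lim: "(\<lambda>k. integral\<^sup>L ?\<Omega> (\<lambda>x. (phi k x - w x)\<^sup>2)) \<longlonglongrightarrow> 0"
      "(\<lambda>k. integral\<^sup>L ?\<Omega> (\<lambda>x. (norm (dphi k x - Dw x))\<^sup>2)) \<longlonglongrightarrow> 0"
    using H1_0_test_fun_approximation[OF S w] by blast
  have H: "w \<in> borel_measurable ?\<Omega>" "Dw \<in> borel_measurable ?\<Omega>"
    "integrable ?\<Omega> (\<lambda>x. (w x)\<^sup>2)" "integrable ?\<Omega> (\<lambda>x. (norm (Dw x))\<^sup>2)"
    using w by (auto simp: H1_0_def H1_def)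
  note tf_facts = continuous_imp_borel_measurable_lebesgue_on[OF test_fun_continuous[OF tf]]
    continuous_imp_borel_measurable_lebesgue_on[OF test_fun_continuous_grad[OF tf]]
    integrable_imp_integrable_lebesgue_on[OF S test_fun_integrable_sq[OF tf]]
    integrable_imp_integrable_lebesgue_on[OF S test_fun_integrable_grad_sq[OF tf]]
  have lim_w: "(\<lambda>k. integral\<^sup>L ?\<Omega> (\<lambda>x. (phi k x)\<^sup>2)) \<longlonglongrightarrow> integral\<^sup>L ?\<Omega> (\<lambda>x. (w x)\<^sup>2)"
    using tendsto_integral_norm_sq_L2[of phi ?\<Omega> w] tf_facts H lim(1) by simp
  have lim_Dw: "(\<lambda>k. 4 * r\<^sup>2 * integral\<^sup>L ?\<Omega> (\<lambda>x. (norm (dphi k x))\<^sup>2))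
      \<longlonglongrightarrow> 4 * r\<^sup>2 * integral\<^sup>L ?\<Omega> (\<lambda>x. (norm (Dw x))\<^sup>2)"
    using tendsto_integral_norm_sq_L2[of dphi ?\<Omega> Dw] tf_facts H lim(2) by (simp add: tendsto_mult_left)
  have "integral\<^sup>L ?\<Omega> (\<lambda>x. (phi k x)\<^sup>2) \<le> 4 * r\<^sup>2 * integral\<^sup>L ?\<Omega> (\<lambda>x. (norm (dphi k x))\<^sup>2)"
    for k
    using poincare_test_fun[OF tf[of k]] integral_lebesgue_on_eq[OF S]
      test_fun_eq_0[OF tf[of k]] test_fun_grad_eq_0[OF tf[of k]] test_fun_supp_subset[OF tf[of k]]
    by (metis (no_types, lifting) norm_zero power_zero_numeral subsetD)
  then show ?thesis
    by (intro LIMSEQ_le[OF lim_w lim_Dw]) auto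
qed

lemma harmonic_on_weak_grad_orthogonal_H1_0:
  fixes h :: "real^'n::finite \<Rightarrow> real"
  assumes S: "open S" and harmonic: "harmonic_on S h" and H: "H1 S h Dh" and w: "H1_0 S w Dw"
  shows "integral\<^sup>L (lebesgue_on S) (\<lambda>x. Dh x \<bullet> Dw x) = 0"
proof -
  let ?\<Omega> = "lebesgue_on S"
  have S_sets: "S \<in> sets lebesgue"
    using S by simp
  obtain phi dphi where tf: "\<And>k. test_fun S (phi k) (dphi k)"
    and lim: "(\<lambda>k. integral\<^sup>L ?\<Omega> (\<lambda>x. (norm (dphi k x - Dw x))\<^sup>2)) \<longlonglongrightarrow> 0"
    using H1_0_test_fun_approximation[OF S_sets w] by blast
  have "(\<lambda>k. integral\<^sup>L ?\<Omega> (\<lambda>x. Dh x \<bullet> dphi k x)) \<longlonglongrightarrow> integral\<^sup>L ?\<Omega> (\<lambda>x. Dh x \<bullet> Dw x)"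
  proof (rule tendsto_integral_inner_L2[OF _ _ _ _ _ _ lim])
    show "Dh \<in> borel_measurable ?\<Omega>" "integrable ?\<Omega> (\<lambda>x. (norm (Dh x))\<^sup>2)"
      using H by (auto simp: H1_def)
    show "Dw \<in> borel_measurable ?\<Omega>" "integrable ?\<Omega> (\<lambda>x. (norm (Dw x))\<^sup>2)"
      using w by (auto simp: H1_0_def H1_def)
    show "dphi k \<in> borel_measurable ?\<Omega>" "integrable ?\<Omega> (\<lambda>x. (norm (dphi k x))\<^sup>2)" for k
      using continuous_imp_borel_measurable_lebesgue_on[OF test_fun_continuous_grad[OF tf]]
        integrable_imp_integrable_lebesgue_on[OF S_sets test_fun_integrable_grad_sq[OF tf]]
      by auto
  qed
  moreover have "integral\<^sup>L ?\<Omega> (\<lambda>x. Dh x \<bullet> dphi k x) = 0" for k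
    by (rule harmonic_on_weak_grad_orthogonal_test_fun(2)[OF S harmonic H tf])
  ultimately show ?thesis
    by (simp add: LIMSEQ_const_iff)
qed

section \<open>The modulus eta\<close>

lemma eta_tendsto_0: "(eta C0 \<longlongrightarrow> 0) (at 0)"
proof -
  have "((\<lambda>t. C0 * \<bar>t\<bar> * (1 + \<bar>ln \<bar>t\<bar>\<bar>)) \<longlongrightarrow> 0) (at 0)"
    by real_asymp
  then show ?thesis
    by (rule tendsto_cong[THEN iffD1, rotated]) (simp add: eta_def eventually_at_filter)
qed

lemma continuous_if_modulus_eta:
  assumes g: "\<And>t s. \<bar>g t - g s\<bar> \<le> eta C0 (t - s)"
  shows "continuous_on UNIV g"
proof (intro continuous_at_imp_continuous_on ballI)
  fix s :: real
  have "((\<lambda>t. eta C0 (t - s)) \<longlongrightarrow> 0) (at s)"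
    using LIM_offset[OF eta_tendsto_0[of C0], of "- s"] by simp
  moreover have "\<forall>\<^sub>F t in at s. norm (g t - g s) \<le> eta C0 (t - s)"
    using g by (simp add: always_eventually)
  ultimately have "((\<lambda>t. g t - g s) \<longlongrightarrow> 0) (at s)"
    by (rule Lim_null_comparison[rotated])
  then show "isCont g s"
    by (simp add: isCont_def LIM_zero_iff)
qed

lemma mult_abs_ln_le: "0 < x \<Longrightarrow> x * \<bar>ln x\<bar> \<le> 1 + x\<^sup>2" for x :: real
proof (cases "x \<ge> 1")
  case True
  assume "0 < x"
  then have "x * \<bar>ln x\<bar> \<le> x * x"
    using True ln_le_minus_one[of x] by (intro mult_left_mono) auto
  then show ?thesis
    by (simp add: power2_eq_square)
next
  case False
  assume x: "0 < x"
  have "- ln x \<le> 1 / x - 1"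
    using ln_le_minus_one[of "1 / x"] x by (simp add: ln_div)
  then have "x * (- ln x) \<le> 1 - x"
    using x mult_left_mono[of "- ln x" "1 / x - 1" x] by (simp add: right_diff_distrib)
  with False x show ?thesis
    by (simp add: abs_if) (smt (verit) zero_le_power2)
qed

lemma eta_le:
  assumes C0: "C0 > 0" and \<delta>: "0 < \<delta>"
  shows "eta C0 s \<le> C0 * (2 * s\<^sup>2 / \<delta> + \<delta> * (1 + (1 + \<bar>ln \<delta>\<bar>)\<^sup>2 / 4))"
proof (cases "s = 0")
  case True
  then show ?thesis
    using C0 \<delta> by (simp add: eta_def)
next
  case False
  define L where "L = 1 + \<bar>ln \<delta>\<bar>"
  define x where "x = \<bar>s\<bar> / \<delta>"
  have x: "0 < x" "\<bar>s\<bar> = \<delta> * x"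
    using False \<delta> by (auto simp: x_def)
  \<comment> \<open>split ln |s| = ln \<delta> + ln x: the first part is handled by AM-GM, the second by x |ln x| \<le> 1 + x^2\<close>
  have "\<bar>ln \<bar>s\<bar>\<bar> \<le> \<bar>ln \<delta>\<bar> + \<bar>ln x\<bar>"
    using x \<delta> by (simp add: ln_mult)
  then have "\<bar>s\<bar> * \<bar>ln \<bar>s\<bar>\<bar> \<le> \<bar>s\<bar> * (\<bar>ln \<delta>\<bar> + \<bar>ln x\<bar>)"
    by (rule mult_left_mono) simp
  then have "\<bar>s\<bar> * (1 + \<bar>ln \<bar>s\<bar>\<bar>) \<le> L * \<bar>s\<bar> + \<delta> * (x * \<bar>ln x\<bar>)"
    using x(2) by (simp add: L_def algebra_simps)
  also have "\<dots> \<le> (\<delta> / 4 * L\<^sup>2 + 1 / \<delta> * s\<^sup>2) + \<delta> * (1 + x\<^sup>2)"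
    using inner_le_weighted_squares[of "\<delta> / 2" L "\<bar>s\<bar>"] \<delta> mult_abs_ln_le[OF x(1)]
    by (intro add_mono mult_left_mono) (auto simp: abs_mult L_def)
  also have "\<dots> = 2 * s\<^sup>2 / \<delta> + \<delta> * (1 + L\<^sup>2 / 4)"
    using \<delta> by (simp add: x_def power2_eq_square field_simps)
  finally show ?thesis
    using False C0 by (simp add: eta_def L_def mult.assoc mult_left_mono)
qed

lemma integrable_modulus_eta_comp:
  fixes v :: "'a::euclidean_space \<Rightarrow> real"
  assumes C0: "C0 > 0" and g: "\<And>t s. \<bar>g t - g s\<bar> \<le> eta C0 (t - s)"
    and S: "S \<in> lmeasurable" and v: "v \<in> borel_measurable (lebesgue_on S)"
    and v_sq: "integrable (lebesgue_on S) (\<lambda>x. (v x)\<^sup>2)"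
  shows "integrable (lebesgue_on S) (\<lambda>x. g (v x))"
proof (rule Bochner_Integration.integrable_bound)
  show "integrable (lebesgue_on S) (\<lambda>x. \<bar>g 0\<bar> + C0 * (2 * (v x)\<^sup>2 + 5 / 4))"
    using v_sq integrable_const_lebesgue_on[OF S] by simp
  show "(\<lambda>x. g (v x)) \<in> borel_measurable (lebesgue_on S)"
    using measurable_compose[OF v borel_measurable_continuous_onI[OF continuous_if_modulus_eta[OF g]]] .
  have "\<bar>g (v x)\<bar> \<le> \<bar>g 0\<bar> + C0 * (2 * (v x)\<^sup>2 + 5 / 4)" for x
    using g[of "v x" 0] eta_le[OF C0 zero_less_one, of "v x"] by simp
  then show "AE x in lebesgue_on S. norm (g (v x))
      \<le> norm (\<bar>g 0\<bar> + C0 * (2 * (v x)\<^sup>2 + 5 / 4))"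
    using C0 by (intro AE_I2) (simp add: order_trans[OF _ abs_ge_self])
qed

section \<open>Comparison with the harmonic replacement\<close>

lemma minimizer_gradient_gap_le:
  fixes u h :: "real^'n::finite \<Rightarrow> real"
  assumes C0: "C0 > 0" and g: "\<And>t s. \<bar>g t - g s\<bar> \<le> eta C0 (t - s)" and \<delta>: "0 < \<delta>"
    and S: "S \<in> lmeasurable" and minimizer: "minimizer S g u Du" and Hh: "H1 S h Dh"
    and w: "H1_0 S (\<lambda>x. h x - u x) (\<lambda>x. Dh x - Du x)"
    and orth: "integral\<^sup>L (lebesgue_on S) (\<lambda>x. Dh x \<bullet> (Dh x - Du x)) = 0"
  shows "integral\<^sup>L (lebesgue_on S) (\<lambda>x. (norm (Du x - Dh x))\<^sup>2)
    \<le> 2 * C0 * (2 / \<delta> * integral\<^sup>L (lebesgue_on S) (\<lambda>x. (h x - u x)\<^sup>2)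
      + \<delta> * (1 + (1 + \<bar>ln \<delta>\<bar>)\<^sup>2 / 4) * measure lebesgue S)"
proof -
  let ?\<Omega> = "lebesgue_on S"
  let ?c = "\<delta> * (1 + (1 + \<bar>ln \<delta>\<bar>)\<^sup>2 / 4)"
  have Hu: "H1 S u Du"
    using minimizer by (simp add: minimizer_def)
  then have G_le: "Gfun S g u Du \<le> Gfun S g h Dh"
    using minimizer Hh w by (simp add: minimizer_def)
  have u: "u \<in> borel_measurable ?\<Omega>" "integrable ?\<Omega> (\<lambda>x. (u x)\<^sup>2)"
    "Du \<in> borel_measurable ?\<Omega>" "integrable ?\<Omega> (\<lambda>x. (norm (Du x))\<^sup>2)"
    and h: "h \<in> borel_measurable ?\<Omega>" "integrable ?\<Omega> (\<lambda>x. (h x)\<^sup>2)"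
    "Dh \<in> borel_measurable ?\<Omega>" "integrable ?\<Omega> (\<lambda>x. (norm (Dh x))\<^sup>2)"
    and w_sq: "integrable ?\<Omega> (\<lambda>x. (h x - u x)\<^sup>2)"
    using Hu Hh w by (auto simp: H1_def H1_0_def)
  have gu: "integrable ?\<Omega> (\<lambda>x. g (u x))" and gh: "integrable ?\<Omega> (\<lambda>x. g (h x))"
    using integrable_modulus_eta_comp[OF C0 g S] u h by auto
  \<comment> \<open>by orthogonality the energy gap is exactly the gradient gap, and minimality bounds it\<close>
  have "integral\<^sup>L ?\<Omega> (\<lambda>x. (norm (Du x - Dh x))\<^sup>2)
      = integral\<^sup>L ?\<Omega> (\<lambda>x. (norm (Du x))\<^sup>2) - integral\<^sup>L ?\<Omega> (\<lambda>x. (norm (Dh x))\<^sup>2)"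
    using integral_norm_diff_sq_orthogonal[OF u(3) h(3) u(4) h(4) orth] .
  also have "\<dots> \<le> 2 * integral\<^sup>L ?\<Omega> (\<lambda>x. g (h x) - g (u x))"
    using G_le u(4) h(4) gu gh by (simp add: Gfun_def)
  also have "\<dots> \<le> 2 * integral\<^sup>L ?\<Omega> (\<lambda>x. C0 * (2 / \<delta>) * (h x - u x)\<^sup>2 + C0 * ?c)"
  proof -
    have "g (h x) - g (u x) \<le> C0 * (2 / \<delta>) * (h x - u x)\<^sup>2 + C0 * ?c" for x
      using g[of "h x" "u x"] eta_le[OF C0 \<delta>, of "h x - u x"] by (simp add: algebra_simps)
    then show ?thesis
      using gu gh w_sq integrable_const_lebesgue_on[OF S] by (intro mult_left_mono integral_mono) auto
  qed
  also have "\<dots> = 2 * C0 * (2 / \<delta> * integral\<^sup>L ?\<Omega> (\<lambda>x. (h x - u x)\<^sup>2) + ?c * measure lebesgue S)"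
    using w_sq integrable_const_lebesgue_on[OF S] S
    by (simp add: algebra_simps lebesgue_integral_const measure_restrict_space fmeasurable_def)
  finally show ?thesis .
qed

lemma harmonic_replacement_gradient_bound:
  fixes u h :: "real^'n::finite \<Rightarrow> real"
  assumes C0: "C0 > 0" and r: "0 < r" and g: "\<And>t s. \<bar>g t - g s\<bar> \<le> eta C0 (t - s)"
    and minimizer: "minimizer (ball 0 r) g u Du" and harmonic: "harmonic_on (ball 0 r) h"
    and Hh: "H1 (ball 0 r) h Dh" and w: "H1_0 (ball 0 r) (\<lambda>x. h x - u x) (\<lambda>x. Dh x - Du x)"
  shows "integral\<^sup>L (lebesgue_on (ball 0 r)) (\<lambda>x. (norm (Du x - Dh x))\<^sup>2)
    \<le> 128 * C0\<^sup>2 * r\<^sup>2 * (1 + (1 + \<bar>ln (32 * C0 * r\<^sup>2)\<bar>)\<^sup>2 / 4) * measure lebesgue (ball (0::real^'n) r)"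
proof -
  let ?\<Omega> = "lebesgue_on (ball (0::real^'n) r)"
  define A where "A = integral\<^sup>L ?\<Omega> (\<lambda>x. (norm (Du x - Dh x))\<^sup>2)"
  define c where "c = 1 + (1 + \<bar>ln (32 * C0 * r\<^sup>2)\<bar>)\<^sup>2 / 4"
  define V where "V = measure lebesgue (ball (0::real^'n) r)"
  \<comment> \<open>this choice of the parameter makes the Poincare term absorbable into the left-hand side\<close>
  define \<delta> where "\<delta> = 32 * C0 * r\<^sup>2"
  have \<delta>: "0 < \<delta>"
    using C0 r by (simp add: \<delta>_def)
  have "integral\<^sup>L ?\<Omega> (\<lambda>x. Dh x \<bullet> (Dh x - Du x)) = 0"
    by (rule harmonic_on_weak_grad_orthogonal_H1_0[OF open_ball harmonic Hh w])
  then have "A \<le> 2 * C0 * (2 / \<delta> * integral\<^sup>L ?\<Omega> (\<lambda>x. (h x - u x)\<^sup>2) + \<delta> * c * V)"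
    unfolding A_def c_def V_def \<delta>_def
    using minimizer_gradient_gap_le[OF C0 g \<delta>[unfolded \<delta>_def] _ minimizer Hh w] by simp
  also have "\<dots> \<le> 2 * C0 * (2 / \<delta> * (4 * r\<^sup>2 * A) + \<delta> * c * V)"
  proof -
    have "integral\<^sup>L ?\<Omega> (\<lambda>x. (h x - u x)\<^sup>2) \<le> 4 * r\<^sup>2 * A"
      using poincare_H1_0[OF w] by (simp add: A_def norm_minus_commute)
    then show ?thesis
      using C0 \<delta> by (intro mult_left_mono add_right_mono) auto
  qed
  also have "\<dots> = A / 2 + 2 * C0 * \<delta> * c * V"
    using C0 r by (simp add: \<delta>_def field_simps power2_eq_square)
  finally have "A \<le> 4 * C0 * \<delta> * c * V"
    by simp
  then show ?thesis
    by (simp add: A_def c_def V_def \<delta>_def power2_eq_square algebra_simps)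
qed

lemma harmonic_replacement_estimate:
  fixes u h :: "real^'n::finite \<Rightarrow> real"
  assumes C0: "C0 > 0" and r: "0 < r" and g: "\<And>t s. \<bar>g t - g s\<bar> \<le> eta C0 (t - s)"
    and minimizer: "minimizer (ball 0 r) g u Du" and harmonic: "harmonic_on (ball 0 r) h"
    and Hh: "H1 (ball 0 r) h Dh" and w: "H1_0 (ball 0 r) (\<lambda>x. h x - u x) (\<lambda>x. Dh x - Du x)"
  shows "1 / measure lebesgue (ball (0::real^'n) r)
      * integral\<^sup>L (lebesgue_on (ball 0 r)) (\<lambda>x. (norm (Du x - Dh x))\<^sup>2)
    \<le> 160 * (1 + \<bar>ln (32 * C0)\<bar>)\<^sup>2 * (eta C0 (r\<^sup>2))\<^sup>2 / r\<^sup>2"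
proof -
  define A where "A = integral\<^sup>L (lebesgue_on (ball 0 r)) (\<lambda>x. (norm (Du x - Dh x))\<^sup>2)"
  define V where "V = measure lebesgue (ball (0::real^'n) r)"
  define L where "L = 1 + \<bar>ln (32 * C0 * r\<^sup>2)\<bar>"
  define P where "P = 1 + \<bar>ln (32 * C0)\<bar>"
  define Q where "Q = 1 + 2 * \<bar>ln r\<bar>"
  have V: "V > 0"
    using content_ball_pos[OF r, of 0] by (simp add: V_def measure_completion)
  have PQ: "1 \<le> P" "1 \<le> Q" "0 \<le> L"
    by (auto simp: P_def Q_def L_def)
  have "L \<le> P * Q"
  proof -
    have "\<bar>ln (32 * C0 * r\<^sup>2)\<bar> \<le> \<bar>ln (32 * C0)\<bar> + 2 * \<bar>ln r\<bar>"
      using C0 r by (simp add: ln_mult ln_realpow)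
    moreover have "P * Q = 1 + \<bar>ln (32 * C0)\<bar> + 2 * \<bar>ln r\<bar> + \<bar>ln (32 * C0)\<bar> * (2 * \<bar>ln r\<bar>)"
      by (simp add: P_def Q_def algebra_simps)
    ultimately show ?thesis
      unfolding L_def by (smt (verit) mult_nonneg_nonneg abs_ge_zero)
  qed
  then have L_sq: "128 + 32 * L\<^sup>2 \<le> 160 * P\<^sup>2 * Q\<^sup>2"
    using PQ mult_mono[OF PQ(1,2)] power_mono[of L "P * Q" 2] one_le_power[of "P * Q" 2]
    by (simp add: power_mult_distrib)
  have eta: "eta C0 (r\<^sup>2) = C0 * r\<^sup>2 * Q"
    using r by (simp add: eta_def Q_def ln_realpow abs_mult)
  have "A \<le> 128 * C0\<^sup>2 * r\<^sup>2 * (1 + L\<^sup>2 / 4) * V"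
    unfolding A_def V_def L_def by (rule harmonic_replacement_gradient_bound[OF C0 r g minimizer harmonic Hh w])
  then have "1 / V * A \<le> 1 / V * (128 * C0\<^sup>2 * r\<^sup>2 * (1 + L\<^sup>2 / 4) * V)"
    using V by (intro mult_left_mono) auto
  also have "\<dots> = C0\<^sup>2 * r\<^sup>2 * (128 + 32 * L\<^sup>2)"
    using V by (simp add: field_simps)
  also have "\<dots> \<le> C0\<^sup>2 * r\<^sup>2 * (160 * P\<^sup>2 * Q\<^sup>2)"
    using L_sq by (intro mult_left_mono) auto
  also have "\<dots> = 160 * P\<^sup>2 * (eta C0 (r\<^sup>2))\<^sup>2 / r\<^sup>2"
    using r unfolding eta by (simp add: power2_eq_square field_simps)
  finally show ?thesis
    by (simp add: A_def V_def P_def)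
qed

theorem mainTheorem4:
  fixes C0 :: real
  assumes "CARD('n::finite) \<ge> 3" and "C0 > 0"
  shows "\<exists>cs>0. \<exists>C. \<forall>(r::real) (g::real \<Rightarrow> real) (u::real^'n \<Rightarrow> real) Du h Dh.
     0 < r \<and> r \<le> 1 \<and>
     (\<forall>t s. \<bar>g t - g s\<bar> \<le> eta C0 (t - s)) \<and>
     minimizer (ball 0 r) g u Du \<and>
     ess_osc (ball 0 r) u \<le> ereal cs \<and>
     harmonic_on (ball 0 r) h \<and> H1 (ball 0 r) h Dh \<and>
     H1_0 (ball 0 r) (\<lambda>x. h x - u x) (\<lambda>x. Dh x - Du x)
     \<longrightarrow> (1 / measure lebesgue (ball (0::real^'n) r)) *
           integral\<^sup>L (lebesgue_on (ball 0 r)) (\<lambda>x. (norm (Du x - Dh x))\<^sup>2)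
         \<le> C * (eta C0 (r\<^sup>2))\<^sup>2 / r\<^sup>2"
proof -
  have "1 / measure lebesgue (ball (0::real^'n) r)
      * integral\<^sup>L (lebesgue_on (ball 0 r)) (\<lambda>x. (norm (Du x - Dh x))\<^sup>2)
    \<le> 160 * (1 + \<bar>ln (32 * C0)\<bar>)\<^sup>2 * (eta C0 (r\<^sup>2))\<^sup>2 / r\<^sup>2"
    if "0 < r" "\<forall>t s. \<bar>g t - g s\<bar> \<le> eta C0 (t - s)" "minimizer (ball 0 r) g u Du"
      "harmonic_on (ball 0 r) h" "H1 (ball 0 r) h Dh" "H1_0 (ball 0 r) (\<lambda>x. h x - u x) (\<lambda>x. Dh x - Du x)"
    for r g Du h Dh and u :: "real^'n \<Rightarrow> real"
    by (rule harmonic_replacement_estimate[OF assms(2) that(1) _ that(3-6)]) (use that(2) in blast)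
  then show ?thesis
    by (intro exI[of _ "1 :: real"] conjI exI[of _ "160 * (1 + \<bar>ln (32 * C0)\<bar>)\<^sup>2"]) auto
qed

end
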